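(* Let $(p,q)$ be a piecewise elementary pair of partial isomorphisms of $\mathbb{Q}$ and suppose the triple $(p',q',w)$ liberates $p$ in $(p,q)$. Let $u$ be a reduced word that is either empty or of the form $u=t^nv$ ($n\neq0$, product reduced) such that $uw$ is reduced (no cancellation). Then there are partial isomorphisms $p''\supseteq p'$ and $q''\supseteq q'$ such that $(p'',q'',uw)$ liberates $p$ in $(p,q)$. The same holds with $p$ and $q$ interchanged: if $(p',q',w)$ liberates $q$ in $(p,q)$ and $u$ is empty or $u=s^mv$ ($m\ne0$) with $uw$ reduced, then there are $p''\supseteq p'$, $q''\supseteq q'$ with $(p'',q'',uw)$ liberating $q$ in $(p,q)$.
   Context: A partial isomorphism of $\mathbb{Q}$ is an order-preserving bijection $p$ between finite subsets $\mathrm{dom}(p),\mathrm{ran}(p)$ of $\mathbb{Q}$; $p'\supseteq p$ means $p'$ extends $p$; $p|_I$ is the restriction of $p$ to $I\cap\mathrm{dom}(p)$; $\mathrm{Fix}(p)=\{c\in\mathrm{dom}(p):p(c)=c\}$. An open interval $(a,b)$ is $p$-increasing if $a,b\in\mathrm{dom}(p)$, $p(a)=a$, $p(b)=b$ and $p(c)>c$ for all $c\in\mathrm{dom}(p)\cap(a,b)$; $p$-decreasing likewise with $p(c)<c$; $p$-monotone means either. Writing $\mathrm{dom}(p)=\{a_0<\dots<a_n\}$, $p$ is informative if $p(a_0)=a_0$, $p(a_n)=a_n$ and there are indices $0=i_0<\dots<i_r=n$ with $p(a_{i_k})=a_{i_k}$ and each $(a_{i_k},a_{i_{k+1}})$ $p$-monotone;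 then $\mathrm{Ess}(p)=(\mathrm{dom}(p)\cup\mathrm{ran}(p))\setminus\{a_0,a_n\}$. A pair $(p,q)$ is piecewise elementary if $p,q$ are informative, $\min\mathrm{dom}(p)=\min\mathrm{dom}(q)$ and $\max\mathrm{dom}(p)=\max\mathrm{dom}(q)$; it is elementary if moreover $\mathrm{Fix}(p)\cap\mathrm{Fix}(q)$ consists only of this min and max. Words: $F(s,t)$ free group; for reduced $w=t^{n_k}s^{m_k}\cdots t^{n_1}s^{m_1}$, $w(p,q)(c)=q^{n_k}p^{m_k}\cdots q^{n_1}p^{m_1}(c)$ when defined (rightmost letter acts first); "$w=t^nv$" means the product is reduced. Liberation for elementary pairs: a triple $(p',q',w)$ with $p'\supseteq p$, $q'\supseteq q$ partial isomorphisms and $w$ reduced liberates $p$ in $(p,q)$ if: (i) $p',q'$ are informative; (ii) $\min\mathrm{dom}(p')=\min\mathrm{dom}(p)$, $\min\mathrm{dom}(q')=\min\mathrm{dom}(q)$, $\max\mathrm{dom}(p')=\max\mathrm{dom}(p)$, $\max\mathrm{dom}(q')=\max\mathrm{dom}(q)$; (iii) $w=t^nv$ with $n\neq0$; (iv) $w(p',q')(c)$ is defined for all $c\in\mathrm{Ess}(p)\cup\mathrm{Ess}(q)$ and $w(p',q')(\min(\mathrm{Ess}(p)\cup\mathrm{Ess}(q)))>\max\mathrm{Ess}(p')$; (v) there is an open interval $J$ whose right endpoint is $\max\mathrm{dom}(q)$, with $w(p',q')(c)\in J$ for all $c\in\mathrm{Ess}(p)\cup\mathrm{Ess}(q)$,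 and $J$ is $q'$-increasing if $n>0$ and $q'$-decreasing if $n<0$. It liberates $q$ if the same holds with roles of $p,q$ and of $s,t$ interchanged. Liberation for piecewise elementary pairs: let $a_0<\dots<a_m$ enumerate $\mathrm{Fix}(p)\cap\mathrm{Fix}(q)$ and $I_j=[a_j,a_{j+1}]$ (so each $(p|_{I_j},q|_{I_j})$ is elementary); $(p',q',w)$ liberates $p$ [resp. $q$] in $(p,q)$ if the min/max conditions (ii) hold and for every $j<m$ the triple $(p'|_{I_j},q'|_{I_j},w)$ liberates $p|_{I_j}$ [resp. $q|_{I_j}$] in $(p|_{I_j},q|_{I_j})$. *)

theory Defs
  imports Complex_Main
begin

definition pisom :: "(rat \<rightharpoonup> rat) \<Rightarrow> bool" where
  "pisom p \<longleftrightarrow> finite (dom p) \<and>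
     (\<forall>a\<in>dom p. \<forall>b\<in>dom p. a < b \<longrightarrow> the (p a) < the (p b))"

definition Fixp :: "(rat \<rightharpoonup> rat) \<Rightarrow> rat set" where
  "Fixp p = {c \<in> dom p. p c = Some c}"

definition p_increasing :: "(rat \<rightharpoonup> rat) \<Rightarrow> rat \<Rightarrow> rat \<Rightarrow> bool" where
  "p_increasing p a b \<longleftrightarrow> a < b \<and> a \<in> dom p \<and> b \<in> dom p \<and> p a = Some a \<and> p b = Some b \<and>
     (\<forall>c\<in>dom p. a < c \<and> c < b \<longrightarrow> the (p c) > c)"

definition p_decreasing :: "(rat \<rightharpoonup> rat) \<Rightarrow> rat \<Rightarrow> rat \<Rightarrow> bool" where
  "p_decreasing p a b \<longleftrightarrow> a < b \<and> a \<in> dom p \<and> b \<in> dom p \<and> p a = Some a \<and> p b = Some b \<and>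
     (\<forall>c\<in>dom p. a < c \<and> c < b \<longrightarrow> the (p c) < c)"

definition p_monotone :: "(rat \<rightharpoonup> rat) \<Rightarrow> rat \<Rightarrow> rat \<Rightarrow> bool" where
  "p_monotone p a b \<longleftrightarrow> p_increasing p a b \<or> p_decreasing p a b"

text \<open>Informative: the chosen indices i_0 < ... < i_r are represented by the strictly
  increasing list of the corresponding domain points a_{i_0} < ... < a_{i_r}.\<close>
definition informative :: "(rat \<rightharpoonup> rat) \<Rightarrow> bool" where
  "informative p \<longleftrightarrow> dom p \<noteq> {} \<and>
     p (Min (dom p)) = Some (Min (dom p)) \<and> p (Max (dom p)) = Some (Max (dom p)) \<and>
     (\<exists>xs. xs \<noteq> [] \<and> sorted_wrt (<) xs \<and> set xs \<subseteq> dom p \<and>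
        hd xs = Min (dom p) \<and> last xs = Max (dom p) \<and>
        (\<forall>x\<in>set xs. p x = Some x) \<and>
        (\<forall>i. Suc i < length xs \<longrightarrow> p_monotone p (xs ! i) (xs ! Suc i)))"

definition Ess :: "(rat \<rightharpoonup> rat) \<Rightarrow> rat set" where
  "Ess p = (dom p \<union> ran p) - {Min (dom p), Max (dom p)}"

definition piecewise_elementary :: "(rat \<rightharpoonup> rat) \<Rightarrow> (rat \<rightharpoonup> rat) \<Rightarrow> bool" where
  "piecewise_elementary p q \<longleftrightarrow> informative p \<and> informative q \<and>
     Min (dom p) = Min (dom q) \<and> Max (dom p) = Max (dom q)"

definition elementary :: "(rat \<rightharpoonup> rat) \<Rightarrow> (rat \<rightharpoonup> rat) \<Rightarrow> bool" where
  "elementary p q \<longleftrightarrow> piecewise_elementary p q \<and>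
     Fixp p \<inter> Fixp q = {Min (dom p), Max (dom p)}"

datatype gen = Gs | Gt

text \<open>A word is a list of letters (generator, positive?), read left to right;
  (Gs, True) = s, (Gs, False) = s^-1, (Gt, True) = t, (Gt, False) = t^-1.\<close>
type_synonym word = "(gen \<times> bool) list"

definition reduced :: "word \<Rightarrow> bool" where
  "reduced w \<longleftrightarrow> (\<forall>i. Suc i < length w \<longrightarrow>
      \<not> (fst (w ! i) = fst (w ! Suc i) \<and> snd (w ! i) \<noteq> snd (w ! Suc i)))"

definition pinv :: "(rat \<rightharpoonup> rat) \<Rightarrow> (rat \<rightharpoonup> rat)" where
  "pinv p y = (if \<exists>x. p x = Some y then Some (THE x. p x = Some y) else None)"

fun letter_act :: "(rat \<rightharpoonup> rat) \<Rightarrow> (rat \<rightharpoonup> rat) \<Rightarrow> gen \<times> bool \<Rightarrow> (rat \<rightharpoonup> rat)" where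
  "letter_act p q (Gs, True) = p"
| "letter_act p q (Gs, False) = pinv p"
| "letter_act p q (Gt, True) = q"
| "letter_act p q (Gt, False) = pinv q"

text \<open>w(p,q)(c); the rightmost letter acts first; None = undefined.\<close>
primrec wev :: "(rat \<rightharpoonup> rat) \<Rightarrow> (rat \<rightharpoonup> rat) \<Rightarrow> word \<Rightarrow> rat \<Rightarrow> rat option" where
  "wev p q [] c = Some c"
| "wev p q (l # w) c = Option.bind (wev p q w c) (letter_act p q l)"

definition liberates_p_el ::
  "(rat \<rightharpoonup> rat) \<Rightarrow> (rat \<rightharpoonup> rat) \<Rightarrow> (rat \<rightharpoonup> rat) \<Rightarrow> (rat \<rightharpoonup> rat) \<Rightarrow> word \<Rightarrow> bool" where
  "liberates_p_el p q p' q' w \<longleftrightarrow>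
     pisom p' \<and> pisom q' \<and> p \<subseteq>\<^sub>m p' \<and> q \<subseteq>\<^sub>m q' \<and> reduced w \<and>
     informative p' \<and> informative q' \<and>
     Min (dom p') = Min (dom p) \<and> Min (dom q') = Min (dom q) \<and>
     Max (dom p') = Max (dom p) \<and> Max (dom q') = Max (dom q) \<and>
     w \<noteq> [] \<and> fst (hd w) = Gt \<and>
     (\<forall>c\<in>Ess p \<union> Ess q. wev p' q' w c \<noteq> None) \<and>
     (Ess p \<union> Ess q \<noteq> {} \<longrightarrow>
        (\<forall>x\<in>Ess p'. the (wev p' q' w (Min (Ess p \<union> Ess q))) > x)) \<and>
     (\<exists>a. (\<forall>c\<in>Ess p \<union> Ess q. a < the (wev p' q' w c) \<and> the (wev p' q' w c) < Max (dom q)) \<and>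
          (if snd (hd w) then p_increasing q' a (Max (dom q))
           else p_decreasing q' a (Max (dom q))))"

definition liberates_q_el ::
  "(rat \<rightharpoonup> rat) \<Rightarrow> (rat \<rightharpoonup> rat) \<Rightarrow> (rat \<rightharpoonup> rat) \<Rightarrow> (rat \<rightharpoonup> rat) \<Rightarrow> word \<Rightarrow> bool" where
  "liberates_q_el p q p' q' w \<longleftrightarrow>
     pisom p' \<and> pisom q' \<and> p \<subseteq>\<^sub>m p' \<and> q \<subseteq>\<^sub>m q' \<and> reduced w \<and>
     informative p' \<and> informative q' \<and>
     Min (dom p') = Min (dom p) \<and> Min (dom q') = Min (dom q) \<and>
     Max (dom p') = Max (dom p) \<and> Max (dom q') = Max (dom q) \<and>
     w \<noteq> [] \<and> fst (hd w) = Gs \<and>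
     (\<forall>c\<in>Ess p \<union> Ess q. wev p' q' w c \<noteq> None) \<and>
     (Ess p \<union> Ess q \<noteq> {} \<longrightarrow>
        (\<forall>x\<in>Ess q'. the (wev p' q' w (Min (Ess p \<union> Ess q))) > x)) \<and>
     (\<exists>a. (\<forall>c\<in>Ess p \<union> Ess q. a < the (wev p' q' w c) \<and> the (wev p' q' w c) < Max (dom p)) \<and>
          (if snd (hd w) then p_increasing p' a (Max (dom p))
           else p_decreasing p' a (Max (dom p))))"

definition liberates_p ::
  "(rat \<rightharpoonup> rat) \<Rightarrow> (rat \<rightharpoonup> rat) \<Rightarrow> (rat \<rightharpoonup> rat) \<Rightarrow> (rat \<rightharpoonup> rat) \<Rightarrow> word \<Rightarrow> bool" where
  "liberates_p p q p' q' w \<longleftrightarrow>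
     pisom p' \<and> pisom q' \<and> p \<subseteq>\<^sub>m p' \<and> q \<subseteq>\<^sub>m q' \<and> reduced w \<and>
     Min (dom p') = Min (dom p) \<and> Min (dom q') = Min (dom q) \<and>
     Max (dom p') = Max (dom p) \<and> Max (dom q') = Max (dom q) \<and>
     (\<forall>a b. a \<in> Fixp p \<inter> Fixp q \<and> b \<in> Fixp p \<inter> Fixp q \<and> a < b \<and>
            (\<forall>c\<in>Fixp p \<inter> Fixp q. \<not> (a < c \<and> c < b)) \<longrightarrow>
        liberates_p_el (p |` {a..b}) (q |` {a..b}) (p' |` {a..b}) (q' |` {a..b}) w)"

definition liberates_q ::
  "(rat \<rightharpoonup> rat) \<Rightarrow> (rat \<rightharpoonup> rat) \<Rightarrow> (rat \<rightharpoonup> rat) \<Rightarrow> (rat \<rightharpoonup> rat) \<Rightarrow> word \<Rightarrow> bool" where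
  "liberates_q p q p' q' w \<longleftrightarrow>
     pisom p' \<and> pisom q' \<and> p \<subseteq>\<^sub>m p' \<and> q \<subseteq>\<^sub>m q' \<and> reduced w \<and>
     Min (dom p') = Min (dom p) \<and> Min (dom q') = Min (dom q) \<and>
     Max (dom p') = Max (dom p) \<and> Max (dom q') = Max (dom q) \<and>
     (\<forall>a b. a \<in> Fixp p \<inter> Fixp q \<and> b \<in> Fixp p \<inter> Fixp q \<and> a < b \<and>
            (\<forall>c\<in>Fixp p \<inter> Fixp q. \<not> (a < c \<and> c < b)) \<longrightarrow>
        liberates_q_el (p |` {a..b}) (q |` {a..b}) (p' |` {a..b}) (q' |` {a..b}) w)"

end

theory Submission
  imports Defs
begin

text \<open>
  The argument is first carried out for an elementary pair on an interval \<open>[a, b]\<close>.  There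
  an informative partial isomorphism with extreme points \<open>a < b\<close> is the same as a framed
  one: it fixes \<open>a\<close> and \<open>b\<close> and is sign separated (two points moved in opposite directions
  are separated by a fixed point), a local condition that survives extensions.  The letters
  of \<open>u\<close> are prepended one at a time, from right to left.  While they repeat the first letter
  \<open>t\<^sup>\<plusminus>\<^sup>1\<close> of \<open>w\<close>, the images of the essential points stay in the monotone interval \<open>J\<close> and
  only \<open>q\<close> is extended inside \<open>J\<close>.  From the first other letter on, the images lie above all
  other interior points (a frontier), and the map of each new letter is extended by an order
  preserving affine map that pushes them further up; when the generator changes, a fixed
  point is first added below them.  As \<open>u\<close> starts with \<open>t\<^sup>\<plusminus>\<^sup>1\<close>, the final frontier is
  liberating.

  The piecewise elementary case follows by patching the elementary solutions together on the
  intervals between consecutive common fixed points, and the statement for \<open>q\<close> follows from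
  the one for \<open>p\<close> by interchanging \<open>s\<close> and \<open>t\<close>.
\<close>

lemma pisom_less:
  assumes "pisom M" "M x = Some u" "M y = Some v" "x < y" shows "u < v"
  using assms unfolding pisom_def by (metis domI option.sel)

lemma pisom_less_iff:
  assumes "pisom M" "M x = Some u" "M y = Some v" shows "u < v \<longleftrightarrow> x < y"
  using pisom_less[OF assms(1,2,3)] pisom_less[OF assms(1,3,2)]
  by (metis less_asym' linorder_neqE_linordered_idom option.inject assms(2,3))

lemma pisom_le_iff:
  assumes "pisom M" "M x = Some u" "M y = Some v" shows "u \<le> v \<longleftrightarrow> x \<le> y"
  using pisom_less_iff[OF assms(1,3,2)] by auto

lemma pisom_inj:
  assumes "pisom M" "M x = Some u" "M y = Some u" shows "x = y"
  using pisom_less_iff[OF assms(1,2,3)] pisom_less_iff[OF assms(1,3,2)] by auto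

lemma pinv_Some:
  assumes "pisom M" shows "pinv M y = Some x \<longleftrightarrow> M x = Some y"
proof
  assume "pinv M y = Some x"
  then have "\<exists>x. M x = Some y" and "x = (THE x. M x = Some y)"
    unfolding pinv_def by (auto split: if_splits)
  then show "M x = Some y"
    using theI'[of "\<lambda>x. M x = Some y"] pisom_inj[OF assms] by blast
next
  assume h: "M x = Some y"
  have "(THE x. M x = Some y) = x"
    using h pisom_inj[OF assms] by blast
  then show "pinv M y = Some x" unfolding pinv_def using h by auto
qed

lemma map_le_Some: "P \<subseteq>\<^sub>m Q \<Longrightarrow> P x = Some y \<Longrightarrow> Q x = Some y"
  unfolding map_le_def by (metis domI)

lemma map_le_implies_ran_le: "P \<subseteq>\<^sub>m Q \<Longrightarrow> ran P \<subseteq> ran Q"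
  by (auto simp: ran_def dest: map_le_Some)

lemma Fixp_mono: "P \<subseteq>\<^sub>m Q \<Longrightarrow> Fixp P \<subseteq> Fixp Q"
  unfolding Fixp_def using map_le_Some by fastforce

section \<open>Framed partial isomorphisms\<close>

definition points :: "(rat \<rightharpoonup> rat) \<Rightarrow> rat set" where
  "points M = dom M \<union> ran M"

text \<open>For a partial isomorphism whose extreme
  domain points are fixed this is exactly informativity (lemmas below); unlike
  informativity it is a local condition and thus easy to preserve under extension.\<close>

definition sign_separated :: "(rat \<rightharpoonup> rat) \<Rightarrow> bool" where
  "sign_separated M \<longleftrightarrow> (\<forall>y\<in>dom M. \<forall>z\<in>dom M. y < z \<longrightarrow>
      ((the (M y) > y \<and> the (M z) < z) \<or> (the (M y) < y \<and> the (M z) > z)) \<longrightarrow>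
      (\<exists>c\<in>Fixp M. y < c \<and> c < z))"

text \<open>A framed partial isomorphism on \<open>[a, b]\<close> lives on \<open>[a, b]\<close>, fixes \<open>a\<close> and \<open>b\<close> and
  is sign separated: these are the informative partial isomorphisms with extreme domain
  points \<open>a < b\<close>.\<close>

definition framed :: "rat \<Rightarrow> rat \<Rightarrow> (rat \<rightharpoonup> rat) \<Rightarrow> bool" where
  "framed a b M \<longleftrightarrow> a < b \<and> pisom M \<and> sign_separated M \<and> dom M \<subseteq> {a..b} \<and>
     M a = Some a \<and> M b = Some b"

lemma framed_pisom: "framed a b M \<Longrightarrow> pisom M"
  unfolding framed_def by auto

lemma framed_finite: "framed a b M \<Longrightarrow> finite (points M)"
  unfolding framed_def pisom_def points_def using finite_ran by blast

lemma framed_ran: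
  assumes "framed a b M" "M x = Some y" shows "a \<le> y \<and> y \<le> b \<and> a \<le> x \<and> x \<le> b"
proof -
  have "x \<in> {a..b}" using assms unfolding framed_def by auto
  then show ?thesis using assms pisom_le_iff[of M a a x y] pisom_le_iff[of M x y b b]
    unfolding framed_def by auto
qed

lemma framed_points: "framed a b M \<Longrightarrow> points M \<subseteq> {a..b}"
  unfolding points_def ran_def using framed_ran by fastforce

lemma framed_below_b:
  assumes "framed a b M" "M d = Some e" "d < b" shows "e < b"
  using assms pisom_less[of M d e b b] unfolding framed_def by auto

lemma framed_Min: "framed a b M \<Longrightarrow> Min (dom M) = a"
  unfolding framed_def pisom_def by (intro Min_eqI) auto

lemma framed_Max: "framed a b M \<Longrightarrow> Max (dom M) = b"
  unfolding framed_def pisom_def by (intro Max_eqI) auto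

lemma framed_Ess: "framed a b M \<Longrightarrow> Ess M = points M \<inter> {a<..<b}"
  using framed_points[of a b M] framed_Min[of a b M] framed_Max[of a b M]
  unfolding Ess_def points_def by auto

lemma sorted_hd_le: "sorted_wrt (<) (xs::rat list) \<Longrightarrow> x \<in> set xs \<Longrightarrow> hd xs \<le> x"
  by (cases xs) (auto simp: less_imp_le)

lemma sorted_last_ge: "sorted_wrt (<) (xs::rat list) \<Longrightarrow> x \<in> set xs \<Longrightarrow> x \<le> last xs"
  by (induction xs) (auto simp: less_imp_le)

lemma sorted_next_le:
  assumes "sorted_wrt (<) (xs::rat list)" "Suc i < length xs" "z \<in> set xs" "xs ! i < z"
  shows "xs ! Suc i \<le> z"
proof -
  obtain j where j: "j < length xs" "z = xs ! j" using assms(3) by (auto simp: in_set_conv_nth)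
  have "i < j"
    using j assms(2,4) sorted_wrt_nth_less[OF assms(1), of j i] by (cases "j = i") force+
  then show ?thesis using j sorted_wrt_nth_less[OF assms(1), of "Suc i" j]
    by (cases "j = Suc i") auto
qed

lemma sorted_locate:
  assumes "sorted_wrt (<) (xs::rat list)" "xs \<noteq> []" "hd xs < y" "y < last xs"
  shows "\<exists>i. Suc i < length xs \<and> xs ! i < y \<and> y \<le> xs ! Suc i"
  using assms
proof (induction xs)
  case Nil then show ?case by simp
next
  case (Cons x xs)
  show ?case
  proof (cases "xs \<noteq> [] \<and> y \<le> hd xs")
    case True
    then show ?thesis using Cons by (intro exI[of _ 0]) (auto simp: hd_conv_nth)
  next
    case False
    with Cons.prems have "xs \<noteq> []" "hd xs < y" "y < last xs" by (auto split: if_splits)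
    then obtain i where "Suc i < length xs \<and> xs ! i < y \<and> y \<le> xs ! Suc i"
      using Cons.IH Cons.prems(1) by auto
    then show ?thesis by (intro exI[of _ "Suc i"]) auto
  qed
qed

lemma informative_sign_separated:
  assumes "pisom M" "informative M" shows "sign_separated M"
  unfolding sign_separated_def
proof (intro ballI impI)
  fix y z assume yd: "y \<in> dom M" and zd: "z \<in> dom M" and yz: "y < z"
    and sg: "y < the (M y) \<and> the (M z) < z \<or> the (M y) < y \<and> z < the (M z)"
  obtain xs where xs: "xs \<noteq> []" "sorted_wrt (<) xs"
      "hd xs = Min (dom M)" "last xs = Max (dom M)" "\<forall>x\<in>set xs. M x = Some x"
      "\<forall>i. Suc i < length xs \<longrightarrow> p_monotone M (xs ! i) (xs ! Suc i)"
    using assms(2) unfolding informative_def by blast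
  have fin: "finite (dom M)" using assms(1) unfolding pisom_def by auto
  have "y \<notin> set xs" "z \<notin> set xs" using xs(5) sg by auto
  moreover have "hd xs \<in> set xs" "last xs \<in> set xs" using xs(1) by auto
  ultimately have h1: "hd xs < y" and h2: "z < last xs"
    using xs(3,4) Min_le[OF fin yd] Max_ge[OF fin zd] by (auto simp: order_le_less)
  obtain i where i: "Suc i < length xs" "xs ! i < y" "y \<le> xs ! Suc i"
    using sorted_locate[OF xs(2,1) h1] h2 yz by force
  have nxt: "xs ! Suc i \<in> set xs" using i(1) by auto
  then have yl: "y < xs ! Suc i" using i(3) \<open>y \<notin> set xs\<close> by (metis order_le_less)
  show "\<exists>c\<in>Fixp M. y < c \<and> c < z"
  proof (cases "z < xs ! Suc i")
    case True
    \<comment> \<open>both points lie in one monotone interval, contradicting the opposite signs\<close>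
    have "p_monotone M (xs ! i) (xs ! Suc i)" using xs(6) i(1) by auto
    then have "(y < the (M y) \<and> z < the (M z)) \<or> (the (M y) < y \<and> the (M z) < z)"
      using yd zd i(2) yl yz True unfolding p_monotone_def p_increasing_def p_decreasing_def
      by (meson less_trans)
    then show ?thesis using sg by auto
  next
    case False
    then have "xs ! Suc i < z" using \<open>z \<notin> set xs\<close> nxt by (metis linorder_neqE_linordered_idom)
    moreover have "xs ! Suc i \<in> Fixp M" using xs(5) nxt unfolding Fixp_def by auto
    ultimately show ?thesis using yl by blast
  qed
qed

lemma sign_separated_monotone:
  assumes sep: "sign_separated M" and lr: "l < r" and fix_lr: "M l = Some l" "M r = Some r"
    and nofix: "\<And>c. c \<in> Fixp M \<Longrightarrow> l < c \<Longrightarrow> c < r \<Longrightarrow> False"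
  shows "p_monotone M l r"
proof -
  have nf: "the (M c) \<noteq> c" if "c \<in> dom M" "l < c" "c < r" for c
    using nofix[of c] that unfolding Fixp_def by force
  have same_sign: "the (M c) > c" if c0: "c0 \<in> dom M" "l < c0" "c0 < r" "the (M c0) > c0"
    and c: "c \<in> dom M" "l < c" "c < r" for c c0
  proof (rule ccontr)
    assume "\<not> the (M c) > c"
    then have lt: "the (M c) < c" using nf c by force
    consider "c0 < c" | "c < c0" using lt c0(4) by fastforce
    then obtain d where "d \<in> Fixp M" "l < d" "d < r"
    proof cases
      case 1
      then obtain d where "d \<in> Fixp M" "c0 < d" "d < c"
        using sep c0 c lt unfolding sign_separated_def by blast
      then show ?thesis using that c0(2) c(3) by force
    next
      case 2
      then obtain d where "d \<in> Fixp M" "c < d" "d < c0"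
        using sep c0 c lt unfolding sign_separated_def by blast
      then show ?thesis using that c(2) c0(3) by force
    qed
    then show False using nofix by blast
  qed
  show ?thesis
  proof (cases "\<exists>c0\<in>dom M. l < c0 \<and> c0 < r \<and> the (M c0) > c0")
    case True
    then show ?thesis using same_sign lr fix_lr
      unfolding p_monotone_def p_increasing_def by (auto simp: domI)
  next
    case False
    then show ?thesis using nf lr fix_lr
      unfolding p_monotone_def p_decreasing_def by (force simp: domI)
  qed
qed

lemma sign_separated_informative:
  assumes pi: "pisom M" and ne: "dom M \<noteq> {}" and fix_min: "M (Min (dom M)) = Some (Min (dom M))"
    and fix_max: "M (Max (dom M)) = Some (Max (dom M))" and sep: "sign_separated M"
  shows "informative M"
proof -
  have fin: "finite (dom M)" using pi unfolding pisom_def by auto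
  have FD: "Fixp M \<subseteq> dom M" unfolding Fixp_def by auto
  then obtain xs where xs: "sorted_wrt (<) xs" "set xs = Fixp M"
    using ex1_sorted_list_for_set_if_finite[OF finite_subset[OF FD fin]] by blast
  have minF: "Min (dom M) \<in> Fixp M" and maxF: "Max (dom M) \<in> Fixp M"
    using ne fix_min fix_max fin unfolding Fixp_def by auto
  then have ne_xs: "xs \<noteq> []" using xs(2) by auto
  have "hd xs = Min (dom M)"
    using sorted_hd_le[OF xs(1)] minF xs(2) FD fin ne_xs
    by (metis Min_le hd_in_set order_antisym subsetD)
  moreover have "last xs = Max (dom M)"
    using sorted_last_ge[OF xs(1)] maxF xs(2) FD fin ne_xs
    by (metis Max_ge last_in_set order_antisym subsetD)
  moreover have "p_monotone M (xs ! i) (xs ! Suc i)" if i: "Suc i < length xs" for i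
  proof (rule sign_separated_monotone[OF sep])
    show "xs ! i < xs ! Suc i" using sorted_wrt_nth_less[OF xs(1), of i "Suc i"] i by auto
    show "M (xs ! i) = Some (xs ! i)" "M (xs ! Suc i) = Some (xs ! Suc i)"
      using i xs(2) unfolding Fixp_def by (auto dest: nth_mem)
    show "False" if "c \<in> Fixp M" "xs ! i < c" "c < xs ! Suc i" for c
      using sorted_next_le[OF xs(1) i] xs(2) that by force
  qed
  ultimately show ?thesis unfolding informative_def
    using ne fix_min fix_max ne_xs xs FD unfolding Fixp_def by auto
qed

lemma framed_informative: "framed a b M \<Longrightarrow> informative M"
  by (rule sign_separated_informative)
    (use framed_Min[of a b M] framed_Max[of a b M] in \<open>auto simp: framed_def\<close>)

lemma informative_framed:
  assumes "pisom M" "informative M" "Min (dom M) = a" "Max (dom M) = b" "a < b"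
  shows "framed a b M"
proof -
  have fin: "finite (dom M)" using assms(1) unfolding pisom_def by auto
  then have "dom M \<subseteq> {a..b}" using assms(3,4) by (metis Max_ge Min_le atLeastAtMost_iff subsetI)
  then show ?thesis unfolding framed_def using informative_sign_separated[OF assms(1,2)] assms fin
    unfolding informative_def by auto
qed

section \<open>Extending framed maps\<close>

text \<open>The sign \<open>\<sigma>\<close> is the sign of the exponent of a letter.\<close>

definition monotone_tail :: "bool \<Rightarrow> (rat \<rightharpoonup> rat) \<Rightarrow> rat \<Rightarrow> rat \<Rightarrow> bool" where
  "monotone_tail \<sigma> M f b = (if \<sigma> then p_increasing M f b else p_decreasing M f b)"

lemma monotone_tail_sign:
  assumes "monotone_tail \<sigma> M f b" "c \<in> dom M" "f < c" "c < b"
  shows "if \<sigma> then the (M c) > c else the (M c) < c"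
  using assms unfolding monotone_tail_def p_increasing_def p_decreasing_def by (auto split: if_splits)

lemma monotone_tail_basic:
  assumes "monotone_tail \<sigma> M f b" shows "f < b" "M f = Some f" "M b = Some b"
  using assms unfolding monotone_tail_def p_increasing_def p_decreasing_def by (auto split: if_splits)

lemma monotone_tail_ge: "monotone_tail \<sigma> M f b \<Longrightarrow> framed a b M \<Longrightarrow> a \<le> f"
  using monotone_tail_basic[of \<sigma> M f b] unfolding framed_def by auto

lemma monotone_tailI:
  assumes "f < b" "M f = Some f" "M b = Some b"
    and "\<And>c. c \<in> dom M \<Longrightarrow> f < c \<Longrightarrow> c < b \<Longrightarrow> if \<sigma> then the (M c) > c else the (M c) < c"
  shows "monotone_tail \<sigma> M f b"
  using assms unfolding monotone_tail_def p_increasing_def p_decreasing_def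
  by (auto simp: domI split: if_splits)

definition graft :: "(rat \<rightharpoonup> rat) \<Rightarrow> 'x set \<Rightarrow> ('x \<Rightarrow> rat) \<Rightarrow> ('x \<Rightarrow> rat) \<Rightarrow> (rat \<rightharpoonup> rat)" where
  "graft P X \<alpha> \<beta> = (\<lambda>y. if y \<in> \<alpha> ` X then Some (\<beta> (inv_into X \<alpha> y)) else P y)"

lemma graft_new: "inj_on \<alpha> X \<Longrightarrow> x \<in> X \<Longrightarrow> graft P X \<alpha> \<beta> (\<alpha> x) = Some (\<beta> x)"
  unfolding graft_def by auto

lemma graft_old: "y \<notin> \<alpha> ` X \<Longrightarrow> graft P X \<alpha> \<beta> y = P y"
  unfolding graft_def by auto

lemma graft_dom: "dom (graft P X \<alpha> \<beta>) = dom P \<union> \<alpha> ` X"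
  unfolding graft_def by (auto split: if_splits)

lemma graft_ran: "ran (graft P X \<alpha> \<beta>) \<subseteq> ran P \<union> \<beta> ` X"
proof
  fix y assume "y \<in> ran (graft P X \<alpha> \<beta>)"
  then obtain z where z: "graft P X \<alpha> \<beta> z = Some y" by (auto simp: ran_def)
  show "y \<in> ran P \<union> \<beta> ` X"
  proof (cases "z \<in> \<alpha> ` X")
    case True
    then show ?thesis using z unfolding graft_def by (auto intro: inv_into_into)
  next
    case False
    then show ?thesis using z graft_old[OF False] by (auto intro: ranI)
  qed
qed

lemma graft_extends: "\<forall>x\<in>X. \<alpha> x \<notin> dom P \<Longrightarrow> P \<subseteq>\<^sub>m graft P X \<alpha> \<beta>"
  unfolding map_le_def by (metis graft_old imageE)

lemma graft_cases:
  assumes inj: "inj_on \<alpha> X" and y: "y \<in> dom (graft P X \<alpha> \<beta>)"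
  obtains "y \<in> dom P" "graft P X \<alpha> \<beta> y = P y"
    | x where "x \<in> X" "y = \<alpha> x" "graft P X \<alpha> \<beta> y = Some (\<beta> x)"
proof (cases "y \<in> \<alpha> ` X")
  case True
  then obtain x where "x \<in> X" "y = \<alpha> x" by blast
  then show ?thesis using that(2) graft_new[OF inj] by blast
next
  case False
  then show ?thesis using that(1) y graft_old[OF False] unfolding graft_dom by blast
qed

lemma graft_pisom:
  assumes pi: "pisom P" and fin: "finite X" and ainj: "inj_on \<alpha> X"
    and amono: "\<forall>x\<in>X. \<forall>y\<in>X. \<alpha> x < \<alpha> y \<longrightarrow> \<beta> x < \<beta> y"
    and compat: "\<forall>d\<in>dom P. \<forall>x\<in>X. (d < \<alpha> x \<longrightarrow> the (P d) < \<beta> x) \<and> (\<alpha> x < d \<longrightarrow> \<beta> x < the (P d))"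
  shows "pisom (graft P X \<alpha> \<beta>)"
  unfolding pisom_def
proof (intro conjI ballI impI)
  show "finite (dom (graft P X \<alpha> \<beta>))" using pi fin unfolding graft_dom pisom_def by auto
next
  fix y z assume y: "y \<in> dom (graft P X \<alpha> \<beta>)" and z: "z \<in> dom (graft P X \<alpha> \<beta>)" and yz: "y < z"
  show "the (graft P X \<alpha> \<beta> y) < the (graft P X \<alpha> \<beta> z)"
    using graft_cases[OF ainj y]
  proof cases
    case 1
    note y_old = this
    show ?thesis using graft_cases[OF ainj z]
    proof cases
      case 1
      then show ?thesis using y_old pi yz unfolding pisom_def by simp
    next
      case (2 x)
      then show ?thesis using y_old compat yz by auto
    qed
  next
    case (2 x)
    note y_new = this
    show ?thesis using graft_cases[OF ainj z]
    proof cases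
      case 1
      then show ?thesis using y_new compat yz by auto
    next
      case (2 x')
      then show ?thesis using y_new amono yz by auto
    qed
  qed
qed

lemma sign_separated_tail_extension:
  assumes sep: "sign_separated P" and sub: "P \<subseteq>\<^sub>m P'"
    and fix_fb: "P' f = Some f" "P' b = Some b" and below_b: "\<forall>y\<in>dom P'. y \<le> b"
    and new: "\<forall>y\<in>dom P' - dom P. f < y \<and> y < b"
    and tail_sign: "\<And>c. c \<in> dom P' \<Longrightarrow> f < c \<Longrightarrow> c < b \<Longrightarrow> if \<sigma> then the (P' c) > c else the (P' c) < c"
  shows "sign_separated P'"
  unfolding sign_separated_def
proof (intro ballI impI)
  fix y z assume y: "y \<in> dom P'" and z: "z \<in> dom P'" and yz: "y < z"
    and sg: "y < the (P' y) \<and> the (P' z) < z \<or> the (P' y) < y \<and> z < the (P' z)"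
  show "\<exists>c\<in>Fixp P'. y < c \<and> c < z"
  proof (cases "y \<in> dom P \<and> z \<in> dom P")
    case True
    then have "P' y = P y" "P' z = P z" using sub unfolding map_le_def by auto
    then obtain c where "c \<in> Fixp P" "y < c" "c < z"
      using sep True sg yz unfolding sign_separated_def by auto
    then show ?thesis using Fixp_mono[OF sub] by blast
  next
    case False
    text \<open>A new point lies in the tail; both points are moved, so they cannot both lie in
      the tail, and the fixed point \<open>f\<close> separates them.\<close>
    then consider "y \<in> dom P' - dom P" | "z \<in> dom P' - dom P" using y z by blast
    then have "f < z" using new yz by cases (auto intro: less_trans)
    have moved: "P' y \<noteq> Some y" "P' z \<noteq> Some z" using sg by auto
    have "z \<le> b" using below_b z by auto
    moreover have "z \<noteq> b" using moved(2) fix_fb(2) by auto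
    ultimately have "z < b" by auto
    have "\<not> f < y"
    proof
      assume "f < y"
      then have "if \<sigma> then the (P' y) > y else the (P' y) < y" using tail_sign[OF y] yz \<open>z < b\<close> by auto
      moreover have "if \<sigma> then the (P' z) > z else the (P' z) < z" using tail_sign[OF z \<open>f < z\<close> \<open>z < b\<close>] .
      ultimately show False using sg by (cases \<sigma>) auto
    qed
    moreover have "y \<noteq> f" using moved(1) fix_fb(1) by auto
    ultimately have "y < f" by auto
    moreover have "f \<in> Fixp P'" using fix_fb(1) unfolding Fixp_def by auto
    ultimately show ?thesis using \<open>f < z\<close> by blast
  qed
qed

lemma graft_framed:
  fixes X :: "'x set" and \<alpha> \<beta> :: "'x \<Rightarrow> rat"
  assumes ok: "framed a b P" and tail: "monotone_tail \<sigma> P f b" and fa: "a \<le> f"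
    and fin: "finite X" and ainj: "inj_on \<alpha> X"
    and anew: "\<forall>x\<in>X. \<alpha> x \<notin> dom P \<and> f < \<alpha> x \<and> \<alpha> x < b"
    and sgn: "\<forall>x\<in>X. if \<sigma> then \<beta> x > \<alpha> x else \<beta> x < \<alpha> x"
    and amono: "\<forall>x\<in>X. \<forall>y\<in>X. \<alpha> x < \<alpha> y \<longrightarrow> \<beta> x < \<beta> y"
    and compat: "\<forall>d\<in>dom P. \<forall>x\<in>X. (d < \<alpha> x \<longrightarrow> the (P d) < \<beta> x) \<and> (\<alpha> x < d \<longrightarrow> \<beta> x < the (P d))"
  shows "framed a b (graft P X \<alpha> \<beta>) \<and> monotone_tail \<sigma> (graft P X \<alpha> \<beta>) f b \<and> P \<subseteq>\<^sub>m graft P X \<alpha> \<beta>"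
proof -
  let ?P = "graft P X \<alpha> \<beta>"
  have okP: "a < b" "pisom P" "sign_separated P" "dom P \<subseteq> {a..b}" "P a = Some a" "P b = Some b"
    using ok unfolding framed_def by auto
  have sub: "P \<subseteq>\<^sub>m ?P" using anew by (intro graft_extends) auto
  have fb: "f < b" "P f = Some f" using monotone_tail_basic[OF tail] by auto
  have fix_fab: "?P f = Some f" "?P a = Some a" "?P b = Some b"
    using map_le_Some[OF sub] fb okP by auto
  have new: "\<forall>y\<in>dom ?P - dom P. f < y \<and> y < b" using anew unfolding graft_dom by auto
  have dom_ab: "dom ?P \<subseteq> {a..b}"
  proof
    fix y assume y: "y \<in> dom ?P"
    show "y \<in> {a..b}"
    proof (cases "y \<in> dom P")
      case False
      then have "f < y" "y < b" using new y by auto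
      then show ?thesis using fa by auto
    qed (use okP(4) in auto)
  qed
  then have below_b: "\<forall>y\<in>dom ?P. y \<le> b" by auto
  have tail_sign: "if \<sigma> then the (?P c) > c else the (?P c) < c"
    if c: "c \<in> dom ?P" "f < c" "c < b" for c
    using graft_cases[OF ainj c(1)]
  proof cases
    case 1 then show ?thesis using monotone_tail_sign[OF tail _ c(2,3)] by simp
  next
    case (2 x) then show ?thesis using sgn by auto
  qed
  have "sign_separated ?P"
    by (rule sign_separated_tail_extension[OF okP(3) sub fix_fab(1,3) below_b new tail_sign])
  moreover have "monotone_tail \<sigma> ?P f b" using tail_sign by (intro monotone_tailI fb(1) fix_fab)
  ultimately show ?thesis
    unfolding framed_def using okP graft_pisom[OF okP(2) fin ainj amono compat] dom_ab fix_fab sub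
    by auto
qed

text \<open>If all points of \<open>P\<close> other than \<open>b\<close> lie below \<open>f\<close>, then \<open>f\<close> may be made a fixed
  point, and \<open>(f, b)\<close> is then a monotone tail of either sign (it contains no points).\<close>

lemma add_top_fix:
  assumes ok: "framed a b P" and f: "a < f" "f < b" and below: "\<forall>y\<in>points P. y < f \<or> y = b"
  shows "framed a b (P(f \<mapsto> f)) \<and> monotone_tail \<sigma> (P(f \<mapsto> f)) f b \<and> P \<subseteq>\<^sub>m P(f \<mapsto> f)"
proof -
  let ?P = "P(f \<mapsto> f)"
  have okP: "a < b" "pisom P" "sign_separated P" "dom P \<subseteq> {a..b}" "P a = Some a" "P b = Some b"
    using ok unfolding framed_def by auto
  have fnd: "f \<notin> dom P" using below f unfolding points_def by auto
  have sub: "P \<subseteq>\<^sub>m ?P" using fnd unfolding map_le_def by auto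
  have old: "(d < f \<and> the (P d) < f) \<or> (d = b \<and> the (P d) = b)" if d: "d \<in> dom P" for d
  proof -
    obtain v where v: "P d = Some v" using d by auto
    have "v \<in> points P" "d \<in> points P" using v unfolding points_def ran_def by auto
    then have "d < f \<or> d = b" "v < f \<or> v = b" using below by auto
    moreover have "v = b \<longrightarrow> d = b" using pisom_inj[OF okP(2) v] okP(6) by auto
    ultimately show ?thesis using v okP(6) by auto
  qed
  have pi: "pisom ?P" unfolding pisom_def
  proof (intro conjI ballI impI)
    show "finite (dom ?P)" using okP(2) unfolding pisom_def by auto
  next
    fix y z assume y: "y \<in> dom ?P" and z: "z \<in> dom ?P" and yz: "y < z"
    then show "the (?P y) < the (?P z)"
      using old[of y] old[of z] f okP(2) unfolding pisom_def by (cases "y = f"; cases "z = f") auto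
  qed
  have sep: "sign_separated ?P"
    unfolding sign_separated_def
  proof (intro ballI impI)
    fix y z assume y: "y \<in> dom ?P" and z: "z \<in> dom ?P" and yz: "y < z"
      and sg: "y < the (?P y) \<and> the (?P z) < z \<or> the (?P y) < y \<and> z < the (?P z)"
    then have "y \<noteq> f" "z \<noteq> f" by auto
    then have "y \<in> dom P" "z \<in> dom P" "?P y = P y" "?P z = P z" using y z by auto
    then obtain c where "c \<in> Fixp P" "y < c" "c < z"
      using okP(3) yz sg unfolding sign_separated_def by auto
    then show "\<exists>c\<in>Fixp ?P. y < c \<and> c < z" using Fixp_mono[OF sub] by blast
  qed
  have "\<not> (f < c \<and> c < b)" if "c \<in> dom ?P" for c using old[of c] that by (cases "c = f") auto
  then have "monotone_tail \<sigma> ?P f b" using f okP(6) by (intro monotone_tailI) auto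
  moreover have "framed a b ?P" unfolding framed_def using okP pi sep f by auto
  ultimately show ?thesis using sub by auto
qed

lemma closest_neighbours:
  fixes S :: "rat set"
  assumes "finite S" "l \<in> S" "h \<in> S" "l < x" "x < h"
  obtains lo hi where "lo \<in> S" "hi \<in> S" "l \<le> lo" "lo < x" "x < hi" "hi \<le> h"
    "\<And>d. d \<in> S \<Longrightarrow> d < x \<Longrightarrow> d \<le> lo" "\<And>d. d \<in> S \<Longrightarrow> x < d \<Longrightarrow> hi \<le> d"
proof
  let ?L = "{d\<in>S. d < x}" and ?H = "{d\<in>S. x < d}"
  have ne: "l \<in> ?L" "h \<in> ?H" and fin: "finite ?L" "finite ?H" using assms by auto
  show "Max ?L \<in> S" "Max ?L < x" "l \<le> Max ?L" "\<And>d. d \<in> S \<Longrightarrow> d < x \<Longrightarrow> d \<le> Max ?L"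
    using Max_in[OF fin(1)] Max_ge[OF fin(1)] ne by auto
  show "Min ?H \<in> S" "x < Min ?H" "Min ?H \<le> h" "\<And>d. d \<in> S \<Longrightarrow> x < d \<Longrightarrow> Min ?H \<le> d"
    using Min_in[OF fin(2)] Min_le[OF fin(2)] ne by auto
qed

lemma cover_dom_point:
  assumes ok: "framed a b Q" and tail: "monotone_tail \<sigma> Q f b" and x: "f < x" "x < b"
  shows "\<exists>Q'. framed a b Q' \<and> monotone_tail \<sigma> Q' f b \<and> Q \<subseteq>\<^sub>m Q' \<and> x \<in> dom Q'"
proof (cases "x \<in> dom Q")
  case True then show ?thesis using ok tail by (intro exI[of _ Q]) auto
next
  case x_new: False
  have pi: "pisom Q" using ok unfolding framed_def by auto
  have bas: "f < b" "Q f = Some f" "Q b = Some b" using monotone_tail_basic[OF tail] by auto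
  have fin: "finite (dom Q)" using pi unfolding pisom_def by auto
  obtain lo hi where lh: "lo \<in> dom Q" "hi \<in> dom Q" "f \<le> lo" "lo < x" "x < hi" "hi \<le> b"
    "\<And>d. d \<in> dom Q \<Longrightarrow> d < x \<Longrightarrow> d \<le> lo" "\<And>d. d \<in> dom Q \<Longrightarrow> x < d \<Longrightarrow> hi \<le> d"
    using closest_neighbours[OF fin _ _ x] bas by blast
  obtain ql qh where ql: "Q lo = Some ql" and qh: "Q hi = Some qh" using lh(1,2) by auto
  have "ql < qh" using pisom_less[OF pi ql qh] lh by auto
  moreover have "ql < x" if "\<not> \<sigma>"
  proof (cases "lo = f")
    case False
    then show ?thesis using monotone_tail_sign[OF tail lh(1)] that ql lh by auto
  qed (use ql bas x in auto)
  moreover have "x < qh" if \<sigma>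
  proof (cases "hi = b")
    case False
    then show ?thesis using monotone_tail_sign[OF tail lh(2)] that qh lh by auto
  qed (use qh bas x in auto)
  text \<open>The new image \<open>v\<close> lies between the images of the neighbours, on the side
    of \<open>x\<close> prescribed by \<open>\<sigma>\<close>.\<close>
  ultimately obtain v where v: "ql < v" "v < qh" "if \<sigma> then v > x else v < x"
    by (metis dense max_less_iff_conj min_less_iff_conj)
  let ?Q = "graft Q {x} id (\<lambda>_. v)"
  have "framed a b ?Q \<and> monotone_tail \<sigma> ?Q f b \<and> Q \<subseteq>\<^sub>m ?Q"
  proof (rule graft_framed[OF ok tail monotone_tail_ge[OF tail ok]])
    show "\<forall>d\<in>dom Q. \<forall>y\<in>{x}. (d < id y \<longrightarrow> the (Q d) < v) \<and> (id y < d \<longrightarrow> v < the (Q d))"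
    proof (intro ballI conjI impI)
      fix d y assume d: "d \<in> dom Q" and y: "y \<in> {x}"
      obtain qd where qd: "Q d = Some qd" using d by auto
      show "the (Q d) < v" if "d < id y"
        using that lh(7)[OF d] y pisom_le_iff[OF pi qd ql] qd v by auto
      show "v < the (Q d)" if "id y < d"
        using that lh(8)[OF d] y pisom_le_iff[OF pi qh qd] qd v by auto
    qed
  qed (use x x_new v in auto)
  moreover have "x \<in> dom ?Q" unfolding graft_dom by auto
  ultimately show ?thesis by blast
qed

lemma preimage_gap:
  assumes pi: "pisom Q" and fix_fb: "Q f = Some f" "Q b = Some b" and x: "f < x" "x < b"
    and x_new: "x \<notin> ran Q"
  obtains lo vl hi vh where "Q lo = Some vl" "Q hi = Some vh" "vl < x" "x < vh"
    "f \<le> lo" "lo < hi" "hi \<le> b" "\<And>d. d \<in> dom Q \<Longrightarrow> d \<le> lo \<or> hi \<le> d"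
proof -
  have fin: "finite (ran Q)" using pi unfolding pisom_def by (simp add: finite_ran)
  obtain vl vh where vlh: "vl \<in> ran Q" "vh \<in> ran Q" "f \<le> vl" "vl < x" "x < vh" "vh \<le> b"
    "\<And>e. e \<in> ran Q \<Longrightarrow> e < x \<Longrightarrow> e \<le> vl" "\<And>e. e \<in> ran Q \<Longrightarrow> x < e \<Longrightarrow> vh \<le> e"
    using closest_neighbours[OF fin _ _ x] fix_fb by (blast intro: ranI)
  obtain lo hi where lo: "Q lo = Some vl" and hi: "Q hi = Some vh"
    using vlh(1,2) by (auto simp: ran_def)
  have lohi: "lo < hi" using pisom_less_iff[OF pi lo hi] vlh by auto
  have bounds: "f \<le> lo" "hi \<le> b"
    using pisom_le_iff[OF pi fix_fb(1) lo] pisom_le_iff[OF pi hi fix_fb(2)] vlh by auto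
  have gap: "d \<le> lo \<or> hi \<le> d" if d: "d \<in> dom Q" for d
  proof -
    obtain e where e: "Q d = Some e" using d by auto
    then have "e \<noteq> x" "e \<in> ran Q" using x_new by (auto intro: ranI)
    then show ?thesis using vlh(7,8) pisom_le_iff[OF pi e lo] pisom_le_iff[OF pi hi e] by force
  qed
  show ?thesis by (rule that[OF lo hi vlh(4,5) bounds(1) lohi bounds(2) gap])
qed

lemma cover_ran_point:
  assumes ok: "framed a b Q" and tail: "monotone_tail \<sigma> Q f b" and x: "f < x" "x < b"
  shows "\<exists>Q'. framed a b Q' \<and> monotone_tail \<sigma> Q' f b \<and> Q \<subseteq>\<^sub>m Q' \<and> x \<in> ran Q'"
proof (cases "x \<in> ran Q")
  case True then show ?thesis using ok tail by (intro exI[of _ Q]) auto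
next
  case x_new: False
  have pi: "pisom Q" using ok unfolding framed_def by auto
  have bas: "Q f = Some f" "Q b = Some b" using monotone_tail_basic[OF tail] by auto
  obtain lo vl hi vh where lh: "Q lo = Some vl" "Q hi = Some vh" "vl < x" "x < vh"
    "f \<le> lo" "lo < hi" "hi \<le> b" and gap: "\<And>d. d \<in> dom Q \<Longrightarrow> d \<le> lo \<or> hi \<le> d"
    using preimage_gap[OF pi bas x x_new] by metis
  have "lo < x" if \<sigma>
  proof (cases "lo = f")
    case False
    then have "lo < vl" using monotone_tail_sign[OF tail domI[of Q lo vl, OF lh(1)]] that lh(1,5,6,7) by auto
    then show ?thesis using lh(3) by auto
  qed (use x in auto)
  moreover have "x < hi" if "\<not> \<sigma>"
  proof (cases "hi = b")
    case False
    then have "vh < hi" using monotone_tail_sign[OF tail domI[of Q hi vh, OF lh(2)]] that lh(2,5,6,7) by auto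
    then show ?thesis using lh(4) by auto
  qed (use x in auto)
  text \<open>The new preimage \<open>y\<close> lies in the gap, on the side of \<open>x\<close> prescribed by \<open>\<sigma>\<close>.\<close>
  ultimately obtain y where y: "lo < y" "y < hi" "if \<sigma> then y < x else x < y"
    using lh(6) by (metis dense max_less_iff_conj min_less_iff_conj)
  have y_new: "y \<notin> dom Q" using gap y by (meson leD)
  let ?Q = "graft Q {y} id (\<lambda>_. x)"
  have "framed a b ?Q \<and> monotone_tail \<sigma> ?Q f b \<and> Q \<subseteq>\<^sub>m ?Q"
  proof (rule graft_framed[OF ok tail monotone_tail_ge[OF tail ok]])
    show "\<forall>d\<in>dom Q. \<forall>z\<in>{y}. (d < id z \<longrightarrow> the (Q d) < x) \<and> (id z < d \<longrightarrow> x < the (Q d))"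
    proof (intro ballI conjI impI)
      fix d z assume d: "d \<in> dom Q" and z: "z \<in> {y}"
      obtain e where e: "Q d = Some e" using d by auto
      show "the (Q d) < x" if "d < id z"
        using that gap[OF d] z y pisom_le_iff[OF pi e lh(1)] e lh(3) by auto
      show "x < the (Q d)" if "id z < d"
        using that gap[OF d] z y pisom_le_iff[OF pi lh(2) e] e lh(4) by auto
    qed
  qed (use y y_new lh(5,7) in auto)
  moreover have "x \<in> ran ?Q" using graft_new[of id "{y}" y Q "\<lambda>_. x"] by (auto intro: ranI)
  ultimately show ?thesis by blast
qed

text \<open>Covering a finite set of points of the tail at once; afterwards a letter of sign
  \<open>\<sigma>\<close> can be applied to each of them.\<close>

lemma cover_points:
  assumes ok: "framed a b Q" and tail: "monotone_tail \<sigma> Q f b"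
    and fin: "finite X" and X: "X \<subseteq> {f<..<b}"
  shows "\<exists>Q'. framed a b Q' \<and> monotone_tail \<sigma> Q' f b \<and> Q \<subseteq>\<^sub>m Q' \<and>
           (\<forall>x\<in>X. if \<sigma> then x \<in> dom Q' else x \<in> ran Q')"
  using fin X
proof (induction X rule: finite_induct)
  case empty then show ?case using ok tail by auto
next
  case (insert x X)
  then obtain Q1 where Q1: "framed a b Q1" "monotone_tail \<sigma> Q1 f b" "Q \<subseteq>\<^sub>m Q1"
     "\<forall>x\<in>X. if \<sigma> then x \<in> dom Q1 else x \<in> ran Q1" by auto
  have x: "f < x" "x < b" using insert by auto
  obtain Q2 where Q2: "framed a b Q2" "monotone_tail \<sigma> Q2 f b" "Q1 \<subseteq>\<^sub>m Q2"
    "if \<sigma> then x \<in> dom Q2 else x \<in> ran Q2"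
    using cover_dom_point[OF Q1(1,2) x] cover_ran_point[OF Q1(1,2) x] by (cases \<sigma>) auto
  have "\<forall>y\<in>insert x X. if \<sigma> then y \<in> dom Q2 else y \<in> ran Q2"
    using Q1(4) Q2(4) map_le_implies_dom_le[OF Q2(3)] map_le_implies_ran_le[OF Q2(3)]
    by (cases \<sigma>) auto
  then show ?case using Q2(1,2) map_le_trans[OF Q1(3) Q2(3)] by blast
qed

section \<open>Words acting on partial maps\<close>

fun sel :: "gen \<Rightarrow> (rat \<rightharpoonup> rat) \<Rightarrow> (rat \<rightharpoonup> rat) \<Rightarrow> (rat \<rightharpoonup> rat)" where
  "sel Gs P Q = P" | "sel Gt P Q = Q"

fun other :: "gen \<Rightarrow> gen" where
  "other Gs = Gt" | "other Gt = Gs"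

lemma letter_act_sel: "letter_act P Q (g, \<sigma>) = (if \<sigma> then sel g P Q else pinv (sel g P Q))"
  by (cases g; cases \<sigma>) auto

lemma points_sel: "points P \<union> points Q = points (sel g P Q) \<union> points (sel (other g) P Q)"
  by (cases g) auto

lemma reduced_Cons_hd:
  assumes "reduced (l # v)" "v \<noteq> []" shows "\<not> (fst l = fst (hd v) \<and> snd l \<noteq> snd (hd v))"
  using assms unfolding reduced_def by (auto simp: hd_conv_nth)

lemma reduced_Cons: "reduced (l # v) \<Longrightarrow> reduced v"
  unfolding reduced_def by (metis Suc_less_eq length_Cons nth_Cons_Suc)

lemma letter_act_mono:
  assumes "pisom P" "pisom Q" "pisom P'" "pisom Q'" "P \<subseteq>\<^sub>m P'" "Q \<subseteq>\<^sub>m Q'"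
    and "letter_act P Q l x = Some y"
  shows "letter_act P' Q' l x = Some y"
proof -
  obtain g \<sigma> where l: "l = (g, \<sigma>)" by (cases l)
  have pi: "pisom (sel g P Q)" "pisom (sel g P' Q')" using assms by (cases g; auto)+
  have le: "sel g P Q \<subseteq>\<^sub>m sel g P' Q'" using assms by (cases g) auto
  show ?thesis
    using assms(7) map_le_Some[OF le] pinv_Some[OF pi(1)] pinv_Some[OF pi(2)]
    unfolding l letter_act_sel by (cases \<sigma>) auto
qed

lemma wev_mono:
  assumes "pisom P" "pisom Q" "pisom P'" "pisom Q'" "P \<subseteq>\<^sub>m P'" "Q \<subseteq>\<^sub>m Q'"
  shows "wev P Q v c = Some y \<Longrightarrow> wev P' Q' v c = Some y"
proof (induction v arbitrary: y)
  case Nil then show ?case by simp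
next
  case (Cons l v)
  then obtain z where z: "wev P Q v c = Some z" "letter_act P Q l z = Some y"
    by (cases "wev P Q v c") auto
  then show ?case using Cons.IH[OF z(1)] letter_act_mono[OF assms z(2)] by simp
qed

lemma letter_act_le:
  assumes "pisom P" "pisom Q" "letter_act P Q l x = Some y" "letter_act P Q l x' = Some y'" "x \<le> x'"
  shows "y \<le> y'"
proof -
  obtain g \<sigma> where l: "l = (g, \<sigma>)" by (cases l)
  have pi: "pisom (sel g P Q)" using assms by (cases g) auto
  show ?thesis
    using assms(3-5) pisom_le_iff[OF pi] pinv_Some[OF pi] unfolding l letter_act_sel
    by (cases \<sigma>) auto
qed

lemma wev_le:
  assumes "pisom P" "pisom Q"
  shows "wev P Q v c = Some y \<Longrightarrow> wev P Q v c' = Some y' \<Longrightarrow> c \<le> c' \<Longrightarrow> y \<le> y'"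
proof (induction v arbitrary: y y')
  case Nil then show ?case by simp
next
  case (Cons l v)
  obtain z where z: "wev P Q v c = Some z" "letter_act P Q l z = Some y"
    using Cons.prems by (cases "wev P Q v c") auto
  obtain z' where z': "wev P Q v c' = Some z'" "letter_act P Q l z' = Some y'"
    using Cons.prems by (cases "wev P Q v c'") auto
  show ?case using Cons.IH[OF z(1) z'(1) Cons.prems(3)] letter_act_le[OF assms z(2) z'(2)] by simp
qed

section \<open>Pushing fresh points to the right\<close>

text \<open>The affine order isomorphism of \<open>(a, b)\<close> onto \<open>(R, b)\<close>.\<close>

definition squeeze :: "rat \<Rightarrow> rat \<Rightarrow> rat \<Rightarrow> rat \<Rightarrow> rat" where
  "squeeze a b R x = R + (b - R) * ((x - a) / (b - a))"

lemma squeeze_range: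
  assumes "a < b" "R < b" "a < x" "x < b" shows "R < squeeze a b R x" "squeeze a b R x < b"
proof -
  have t: "0 < (x - a) / (b - a)" "(x - a) / (b - a) < 1" using assms by (auto simp: field_simps)
  then show "R < squeeze a b R x" unfolding squeeze_def using assms by auto
  have "(b - R) * ((x - a) / (b - a)) < (b - R) * 1" using t assms by (intro mult_strict_left_mono) auto
  then show "squeeze a b R x < b" unfolding squeeze_def by auto
qed

lemma squeeze_less_iff:
  assumes "a < b" "R < b" shows "squeeze a b R x < squeeze a b R y \<longleftrightarrow> x < y"
  using assms unfolding squeeze_def by (simp add: divide_less_cancel mult_less_cancel_left_pos)

text \<open>Suppose the finite set \<open>X\<close> lies in the monotone tail \<open>(f, b)\<close> of \<open>M\<close>, above all
  other interior points of \<open>M\<close>, and \<open>R\<close> bounds all these points from above.  Then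
  \<open>M\<close> can be extended by \<open>x \<mapsto> squeeze a b R x\<close> (for an increasing tail) or by
  \<open>squeeze a b R x \<mapsto> x\<close> (for a decreasing tail), so that a letter of the sign of the
  tail moves \<open>X\<close> into \<open>(R, b)\<close>, above everything else.\<close>

lemma push_increasing:
  assumes ok: "framed a b M" and tail: "monotone_tail True M f b" and fa: "a \<le> f"
    and fin: "finite X" and X: "X \<subseteq> {f<..<b}" and X_new: "X \<inter> dom M = {}"
    and X_top: "\<forall>y\<in>points M. a < y \<longrightarrow> y < b \<longrightarrow> y \<notin> X \<longrightarrow> (\<forall>x\<in>X. y < x)"
    and R: "\<forall>y\<in>points M. y < b \<longrightarrow> y \<le> R" "\<forall>x\<in>X. x \<le> R" "R < b"
  shows "framed a b (graft M X id (squeeze a b R)) \<and> monotone_tail True (graft M X id (squeeze a b R)) f b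
    \<and> M \<subseteq>\<^sub>m graft M X id (squeeze a b R)"
proof (rule graft_framed[OF ok tail fa fin])
  let ?h = "squeeze a b R"
  have ab: "a < b" using ok unfolding framed_def by auto
  have hr: "R < ?h x" "?h x < b" if "x \<in> X" for x
    using squeeze_range[OF ab R(3)] X that fa by fastforce+
  show "\<forall>x\<in>X. id x \<notin> dom M \<and> f < id x \<and> id x < b" using X_new X by auto
  show "\<forall>x\<in>X. if True then id x < ?h x else ?h x < id x" using hr R(2) by fastforce
  show "\<forall>x\<in>X. \<forall>y\<in>X. id x < id y \<longrightarrow> ?h x < ?h y" using squeeze_less_iff[OF ab R(3)] by auto
  show "\<forall>d\<in>dom M. \<forall>x\<in>X. (d < id x \<longrightarrow> the (M d) < ?h x) \<and> (id x < d \<longrightarrow> ?h x < the (M d))"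
  proof (intro ballI conjI impI)
    fix d x assume d: "d \<in> dom M" and x: "x \<in> X"
    obtain e where e: "M d = Some e" using d by auto
    have e_pt: "e \<in> points M" and d_pt: "d \<in> points M" using e unfolding points_def by (auto intro: ranI)
    show "the (M d) < ?h x" if "d < id x"
    proof -
      have "e < b" using framed_below_b[OF ok e] that x X by auto
      then show ?thesis using R(1) e_pt e hr[OF x] by fastforce
    qed
    show "?h x < the (M d)" if "id x < d"
    proof -
      text \<open>Only the endpoint \<open>b\<close> of the domain lies above a point of \<open>X\<close>.\<close>
      have "d \<notin> X" "a < d" "d \<le> b" using d X_new that x X fa framed_ran[OF ok e] by auto
      then have "d = b" using X_top d_pt x that by force
      then show ?thesis using e ok hr[OF x] unfolding framed_def by auto
    qed
  qed
qed simp

lemma push_decreasing: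
  assumes ok: "framed a b M" and tail: "monotone_tail False M f b" and fa: "a \<le> f"
    and fin: "finite X" and X: "X \<subseteq> {f<..<b}" and X_new: "X \<inter> ran M = {}"
    and X_top: "\<forall>y\<in>points M. a < y \<longrightarrow> y < b \<longrightarrow> y \<notin> X \<longrightarrow> (\<forall>x\<in>X. y < x)"
    and R: "\<forall>y\<in>points M. y < b \<longrightarrow> y \<le> R" "\<forall>x\<in>X. x \<le> R" "R < b"
  shows "framed a b (graft M X (squeeze a b R) id) \<and> monotone_tail False (graft M X (squeeze a b R) id) f b
    \<and> M \<subseteq>\<^sub>m graft M X (squeeze a b R) id"
proof -
  let ?h = "squeeze a b R"
  have ab: "a < b" using ok unfolding framed_def by auto
  have hr: "R < ?h x" "?h x < b" if "x \<in> X" for x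
    using squeeze_range[OF ab R(3)] X that fa by fastforce+
  have hm: "?h x < ?h y \<longleftrightarrow> x < y" for x y using squeeze_less_iff[OF ab R(3)] .
  have inj: "inj_on ?h X" using hm by (intro inj_onI) (metis less_irrefl linorder_neqE)
  have f_pt: "f \<in> points M" "f < b" using monotone_tail_basic[OF tail] unfolding points_def by auto
  show ?thesis
  proof (rule graft_framed[OF ok tail fa fin inj])
    show "\<forall>x\<in>X. ?h x \<notin> dom M \<and> f < ?h x \<and> ?h x < b"
      using R(1) f_pt hr unfolding points_def by fastforce
    show "\<forall>x\<in>X. if False then ?h x < id x else id x < ?h x" using hr R(2) by fastforce
    show "\<forall>x\<in>X. \<forall>y\<in>X. ?h x < ?h y \<longrightarrow> id x < id y" using hm by auto
    show "\<forall>d\<in>dom M. \<forall>x\<in>X. (d < ?h x \<longrightarrow> the (M d) < id x) \<and> (?h x < d \<longrightarrow> id x < the (M d))"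
    proof (intro ballI conjI impI)
      fix d x assume d: "d \<in> dom M" and x: "x \<in> X"
      obtain e where e: "M d = Some e" using d by auto
      have e_pt: "e \<in> points M" and d_pt: "d \<in> points M" using e unfolding points_def by (auto intro: ranI)
      show "the (M d) < id x" if "d < ?h x"
      proof -
        have "e < b" using framed_below_b[OF ok e] that hr[OF x] by auto
        moreover have "e \<notin> X" using e X_new by (auto intro: ranI)
        moreover have "f < x" using x X by auto
        ultimately show ?thesis using X_top e_pt e x fa by (cases "a < e") auto
      qed
      show "id x < the (M d)" if "?h x < d"
      proof -
        have "d = b" using R(1) d_pt that hr[OF x] framed_ran[OF ok e] by force
        then show ?thesis using e ok x X unfolding framed_def by auto
      qed
    qed
  qed
qed

lemma separating_point:
  fixes A B :: "rat set"
  assumes "finite A" "finite B" "A \<noteq> {}" "B \<noteq> {}" "\<forall>x\<in>A. \<forall>y\<in>B. x < y"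
  obtains c where "\<forall>x\<in>A. x < c" "\<forall>y\<in>B. c < y"
proof
  have lt: "Max A < Min B" using assms by (simp add: Max_in Min_in)
  show "\<forall>x\<in>A. x < (Max A + Min B) / 2" using lt Max_ge[OF assms(1)] by fastforce
  show "\<forall>y\<in>B. (Max A + Min B) / 2 < y" using lt Min_le[OF assms(2)] by fastforce
qed

lemma push_fresh:
  assumes ok: "framed a b M" and tail: "monotone_tail \<sigma> M f b"
    and fin: "finite X" and X: "X \<subseteq> {f<..<b}" and X_new: "X \<inter> (if \<sigma> then dom M else ran M) = {}"
    and X_top: "\<forall>y\<in>points M. a < y \<longrightarrow> y < b \<longrightarrow> y \<notin> X \<longrightarrow> (\<forall>x\<in>X. y < x)"
    and R: "\<forall>y\<in>points M. y < b \<longrightarrow> y \<le> R" "\<forall>x\<in>X. x \<le> R" "R < b"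
  obtains M' where "framed a b M'" "monotone_tail \<sigma> M' f b" "M \<subseteq>\<^sub>m M'"
    "\<forall>x\<in>X. (if \<sigma> then M' else pinv M') x = Some (squeeze a b R x)"
    "points M' \<subseteq> points M \<union> X \<union> squeeze a b R ` X"
    "if \<sigma> then dom M' \<subseteq> dom M \<union> X else ran M' \<subseteq> ran M \<union> X"
proof (cases \<sigma>)
  case True
  let ?h = "squeeze a b R"
  let ?M = "graft M X id ?h"
  have "framed a b ?M \<and> monotone_tail True ?M f b \<and> M \<subseteq>\<^sub>m ?M"
    using push_increasing[OF ok _ monotone_tail_ge[OF tail ok] fin X _ X_top R] tail X_new True by auto
  moreover have "\<forall>x\<in>X. ?M x = Some (?h x)" using graft_new[of id X] by auto
  moreover have "dom ?M \<subseteq> dom M \<union> X" "ran ?M \<subseteq> ran M \<union> ?h ` X"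
    using graft_dom[of M X id] graft_ran[of M X id] by auto
  moreover from this have "points ?M \<subseteq> points M \<union> X \<union> ?h ` X" unfolding points_def by blast
  ultimately show ?thesis using that[of ?M] True by simp
next
  case False
  let ?h = "squeeze a b R"
  let ?M = "graft M X ?h id"
  have ab: "a < b" using ok unfolding framed_def by auto
  have inj: "inj_on ?h X" using squeeze_less_iff[OF ab R(3)] by (intro inj_onI) (metis less_irrefl linorder_neqE)
  have ok': "framed a b ?M \<and> monotone_tail False ?M f b \<and> M \<subseteq>\<^sub>m ?M"
    using push_decreasing[OF ok _ monotone_tail_ge[OF tail ok] fin X _ X_top R] tail X_new False by auto
  moreover have "\<forall>x\<in>X. pinv ?M x = Some (?h x)"
    using graft_new[OF inj, of _ M id] pinv_Some[OF framed_pisom[of a b ?M]] ok' by simp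
  moreover have "dom ?M \<subseteq> dom M \<union> ?h ` X" "ran ?M \<subseteq> ran M \<union> X"
    using graft_dom[of M X ?h] graft_ran[of M X ?h id] by auto
  moreover from this have "points ?M \<subseteq> points M \<union> X \<union> ?h ` X" unfolding points_def by blast
  ultimately show ?thesis using that[of ?M] False by simp
qed


section \<open>Frontiers\<close>

text \<open>It is the
  configuration reached after applying the letter \<open>(g, \<sigma>)\<close>; the next letter can then
  be defined freely on \<open>X\<close>.\<close>

definition frontier :: "rat \<Rightarrow> rat \<Rightarrow> (rat \<rightharpoonup> rat) \<Rightarrow> (rat \<rightharpoonup> rat) \<Rightarrow> rat set \<Rightarrow> gen \<Rightarrow> bool \<Rightarrow> bool" where
  "frontier a b P Q X g \<sigma> \<longleftrightarrow> framed a b P \<and> framed a b Q \<and> finite X \<and> X \<subseteq> {a<..<b} \<and>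
     (\<forall>y\<in>points P \<union> points Q. a < y \<longrightarrow> y < b \<longrightarrow> y \<notin> X \<longrightarrow> (\<forall>x\<in>X. y < x)) \<and>
     X \<inter> points (sel (other g) P Q) = {} \<and>
     X \<inter> (if \<sigma> then dom (sel g P Q) else ran (sel g P Q)) = {} \<and>
     (\<exists>f. monotone_tail \<sigma> (sel g P Q) f b \<and> (\<forall>x\<in>X. f < x))"

definition put_p :: "gen \<Rightarrow> (rat \<rightharpoonup> rat) \<Rightarrow> (rat \<rightharpoonup> rat) \<Rightarrow> (rat \<rightharpoonup> rat)" where
  "put_p g M P = (if g = Gs then M else P)"

definition put_q :: "gen \<Rightarrow> (rat \<rightharpoonup> rat) \<Rightarrow> (rat \<rightharpoonup> rat) \<Rightarrow> (rat \<rightharpoonup> rat)" where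
  "put_q g M Q = (if g = Gt then M else Q)"

lemma sel_put: "sel g (put_p g M P) (put_q g M Q) = M"
  by (cases g) (auto simp: put_p_def put_q_def)

lemma sel_other_put: "sel (other g) (put_p g M P) (put_q g M Q) = sel (other g) P Q"
  by (cases g) (auto simp: put_p_def put_q_def)

lemma put_extends: "sel g P Q \<subseteq>\<^sub>m M \<Longrightarrow> P \<subseteq>\<^sub>m put_p g M P \<and> Q \<subseteq>\<^sub>m put_q g M Q"
  by (cases g) (auto simp: put_p_def put_q_def)

lemma framed_sel: "framed a b P \<and> framed a b Q \<longleftrightarrow> framed a b (sel g P Q) \<and> framed a b (sel (other g) P Q)"
  by (cases g) auto

lemma frontier_put:
  assumes okM: "framed a b M" and okN: "framed a b (sel (other g) P Q)"
    and tail: "monotone_tail \<sigma> M f b" and fR: "f < R" and aR: "a \<le> R"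
    and fin: "finite Y" and Y: "Y \<subseteq> {R<..<b}"
    and lowM: "\<forall>y\<in>points M. y < b \<longrightarrow> y \<notin> Y \<longrightarrow> y < R"
    and lowN: "\<forall>y\<in>points (sel (other g) P Q). y < b \<longrightarrow> y < R"
    and Y_new: "Y \<inter> (if \<sigma> then dom M else ran M) = {}"
  shows "frontier a b (put_p g M P) (put_q g M Q) Y g \<sigma>"
proof -
  let ?P = "put_p g M P" and ?Q = "put_q g M Q"
  have sel': "sel g ?P ?Q = M" "sel (other g) ?P ?Q = sel (other g) P Q"
    by (rule sel_put, rule sel_other_put)
  have pts: "points ?P \<union> points ?Q = points M \<union> points (sel (other g) P Q)"
    using points_sel[of ?P ?Q g] sel' by simp
  show ?thesis
    unfolding frontier_def
  proof (intro conjI)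
    show "framed a b ?P" "framed a b ?Q" using framed_sel[of a b ?P ?Q g] sel' okM okN by auto
    show "finite Y" by (fact fin)
    show "Y \<subseteq> {a<..<b}" using Y aR by force
    show "\<forall>y\<in>points ?P \<union> points ?Q. a < y \<longrightarrow> y < b \<longrightarrow> y \<notin> Y \<longrightarrow> (\<forall>x\<in>Y. y < x)"
      unfolding pts using lowM lowN Y by fastforce
    show "Y \<inter> points (sel (other g) ?P ?Q) = {}" using lowN Y sel'(2) by fastforce
    show "Y \<inter> (if \<sigma> then dom (sel g ?P ?Q) else ran (sel g ?P ?Q)) = {}"
      using Y_new unfolding sel'(1) by (cases \<sigma>) simp_all
    show "\<exists>f. monotone_tail \<sigma> (sel g ?P ?Q) f b \<and> (\<forall>x\<in>Y. f < x)"
      using tail sel'(1) fR Y by fastforce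
  qed
qed

lemma apply_letter_on_top:
  assumes okP: "framed a b P" and okQ: "framed a b Q"
    and tail: "monotone_tail \<sigma> (sel g P Q) f b" and fin: "finite X" and X: "X \<subseteq> {f<..<b}"
    and X_top: "\<forall>y\<in>points (sel g P Q). a < y \<longrightarrow> y < b \<longrightarrow> y \<notin> X \<longrightarrow> (\<forall>x\<in>X. y < x)"
    and X_new: "X \<inter> (if \<sigma> then dom (sel g P Q) else ran (sel g P Q)) = {}"
  obtains P' Q' h where "P \<subseteq>\<^sub>m P'" "Q \<subseteq>\<^sub>m Q'" "frontier a b P' Q' (h ` X) g \<sigma>"
    "\<forall>x\<in>X. letter_act P' Q' (g, \<sigma>) x = Some (h x)"
proof -
  let ?M = "sel g P Q" and ?N = "sel (other g) P Q"
  have okM: "framed a b ?M" and okN: "framed a b ?N" using framed_sel okP okQ by blast+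
  have ab: "a < b" using okP unfolding framed_def by auto
  let ?S = "insert a ((points P \<union> points Q \<union> X) \<inter> {..<b})"
  have "finite ?S" using framed_finite okP okQ fin by auto
  then obtain R where R_above: "\<forall>y\<in>?S. y < R" and Rb: "R < b"
    using separating_point[of ?S "{b}"] ab by auto
  have below_R: "y < R" if "y \<in> points ?M \<union> points ?N \<union> X" "y < b" for y
    using that R_above points_sel[of P Q g] by auto
  have RM: "\<forall>y\<in>points ?M. y < b \<longrightarrow> y \<le> R" using below_R by (auto intro!: less_imp_le)
  have RN: "\<forall>y\<in>points ?N. y < b \<longrightarrow> y < R" using below_R by auto
  have RX: "\<forall>x\<in>X. x < R" using below_R X by auto
  have RX': "\<forall>x\<in>X. x \<le> R" using RX by (simp add: less_imp_le)
  have fa: "a \<le> f" using monotone_tail_ge[OF tail okM] .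
  let ?h = "squeeze a b R"
  have hr: "R < ?h x" "?h x < b" if "x \<in> X" for x
    using squeeze_range[OF ab Rb] X fa that by fastforce+
  obtain M' where M': "framed a b M'" "monotone_tail \<sigma> M' f b" "?M \<subseteq>\<^sub>m M'"
    "\<forall>x\<in>X. (if \<sigma> then M' else pinv M') x = Some (?h x)"
    "points M' \<subseteq> points ?M \<union> X \<union> ?h ` X"
    "if \<sigma> then dom M' \<subseteq> dom ?M \<union> X else ran M' \<subseteq> ran ?M \<union> X"
    by (rule push_fresh[OF okM tail fin X X_new X_top RM RX' Rb])
  have lowM: "\<forall>y\<in>points M'. y < b \<longrightarrow> y \<notin> ?h ` X \<longrightarrow> y < R" using M'(5) below_R by blast
  have side: "(if \<sigma> then dom M' else ran M') \<subseteq> points ?M \<union> X"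
    using M'(6) unfolding points_def by (auto split: if_splits)
  have "?h x \<notin> points ?M \<union> X" if "x \<in> X" for x
    using RM RX hr[OF that] by force
  then have Y_new: "?h ` X \<inter> (if \<sigma> then dom M' else ran M') = {}" using side by blast
  have "f < R" using below_R monotone_tail_basic[OF tail] unfolding points_def by auto
  moreover have "a \<le> R" using R_above by (simp add: less_imp_le)
  moreover have "?h ` X \<subseteq> {R<..<b}" using hr by auto
  ultimately have "frontier a b (put_p g M' P) (put_q g M' Q) (?h ` X) g \<sigma>"
    using frontier_put[OF M'(1) okN M'(2)] fin lowM RN Y_new by blast
  moreover have "\<forall>x\<in>X. letter_act (put_p g M' P) (put_q g M' Q) (g, \<sigma>) x = Some (?h x)"
    using M'(4) sel_put[of g M' P Q] unfolding letter_act_sel by (cases \<sigma>) simp_all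
  ultimately show ?thesis using that put_extends[OF M'(3)] by blast
qed

lemma frontier_same_letter:
  assumes "frontier a b P Q X g \<sigma>"
  obtains P' Q' h where "P \<subseteq>\<^sub>m P'" "Q \<subseteq>\<^sub>m Q'" "frontier a b P' Q' (h ` X) g \<sigma>"
    "\<forall>x\<in>X. letter_act P' Q' (g, \<sigma>) x = Some (h x)"
proof -
  have F: "framed a b P" "framed a b Q" "finite X" "X \<subseteq> {a<..<b}"
     "\<forall>y\<in>points P \<union> points Q. a < y \<longrightarrow> y < b \<longrightarrow> y \<notin> X \<longrightarrow> (\<forall>x\<in>X. y < x)"
     "X \<inter> (if \<sigma> then dom (sel g P Q) else ran (sel g P Q)) = {}"
    using assms unfolding frontier_def by auto
  obtain f where f: "monotone_tail \<sigma> (sel g P Q) f b" "\<forall>x\<in>X. f < x"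
    using assms unfolding frontier_def by auto
  have X: "X \<subseteq> {f<..<b}" using f(2) F(4) by auto
  have "\<forall>y\<in>points (sel g P Q). a < y \<longrightarrow> y < b \<longrightarrow> y \<notin> X \<longrightarrow> (\<forall>x\<in>X. y < x)"
    using F(5) points_sel[of P Q g] by auto
  from apply_letter_on_top[OF F(1,2) f(1) F(3) X this F(6)] that show ?thesis by blast
qed

text \<open>A letter of any sign can be applied to a set \<open>X\<close> lying above all interior points
  of its map: first a fixed point is added between these points and \<open>X\<close>.\<close>

lemma frontier_new_letter:
  assumes okP: "framed a b P" and okQ: "framed a b Q" and fin: "finite X" and Xab: "X \<subseteq> {a<..<b}"
    and X_top: "\<forall>y\<in>points (sel g P Q). a < y \<longrightarrow> y < b \<longrightarrow> (\<forall>x\<in>X. y < x)"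
  obtains P' Q' h where "P \<subseteq>\<^sub>m P'" "Q \<subseteq>\<^sub>m Q'" "frontier a b P' Q' (h ` X) g \<sigma>"
    "\<forall>x\<in>X. letter_act P' Q' (g, \<sigma>) x = Some (h x)"
proof -
  let ?M = "sel g P Q"
  have ab: "a < b" using okP unfolding framed_def by auto
  have okM: "framed a b ?M" using framed_sel okP okQ by blast
  let ?A = "insert a (points ?M \<inter> {..<b})" and ?B = "insert b X"
  have "\<forall>y\<in>?A. \<forall>x\<in>?B. y < x"
    using X_top Xab ab framed_points[OF okM] by fastforce
  then obtain f where f: "\<forall>y\<in>?A. y < f" "\<forall>x\<in>?B. f < x"
    using separating_point[of ?A ?B] framed_finite[OF okM] fin by auto
  have below: "\<forall>y\<in>points ?M. y < f \<or> y = b" using f(1) framed_points[OF okM] by fastforce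
  let ?M1 = "?M(f \<mapsto> f)"
  have M1: "framed a b ?M1" "monotone_tail \<sigma> ?M1 f b" "?M \<subseteq>\<^sub>m ?M1"
    using add_top_fix[OF okM _ _ below] f by auto
  let ?P = "put_p g ?M1 P" and ?Q = "put_q g ?M1 Q"
  have sel1: "sel g ?P ?Q = ?M1" by (rule sel_put)
  have ok1: "framed a b ?P" "framed a b ?Q"
    using framed_sel[of a b ?P ?Q g] framed_sel[of a b P Q g] sel1 sel_other_put M1(1) okP okQ by auto
  have pts1: "points ?M1 \<subseteq> insert f (points ?M)" unfolding points_def ran_def by auto
  have X1: "X \<subseteq> {f<..<b}" using f(2) Xab by auto
  have "X \<inter> points ?M = {}" using X_top Xab by fastforce
  moreover have "f \<notin> X" using f(2) by auto
  ultimately have "X \<inter> points ?M1 = {}" using pts1 by blast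
  then have X_new: "X \<inter> (if \<sigma> then dom (sel g ?P ?Q) else ran (sel g ?P ?Q)) = {}"
    unfolding sel1 points_def by auto
  have "\<forall>y\<in>points (sel g ?P ?Q). a < y \<longrightarrow> y < b \<longrightarrow> y \<notin> X \<longrightarrow> (\<forall>x\<in>X. y < x)"
    using sel1 pts1 X_top f(2) by auto
  from apply_letter_on_top[OF ok1 _ fin X1 this X_new] M1(2) sel1
  obtain P' Q' h where "?P \<subseteq>\<^sub>m P'" "?Q \<subseteq>\<^sub>m Q'" "frontier a b P' Q' (h ` X) g \<sigma>"
    "\<forall>x\<in>X. letter_act P' Q' (g, \<sigma>) x = Some (h x)" by auto
  with that put_extends[OF M1(3)] show ?thesis by (meson map_le_trans)
qed

section \<open>The elementary case\<close>

lemma liberates_p_el_framed: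
  assumes a: "Min (dom p) = a" "Min (dom q) = a" and b: "Max (dom p) = b" "Max (dom q) = b"
  shows "liberates_p_el p q P Q w \<longleftrightarrow>
    framed a b P \<and> framed a b Q \<and> p \<subseteq>\<^sub>m P \<and> q \<subseteq>\<^sub>m Q \<and> reduced w \<and> w \<noteq> [] \<and> fst (hd w) = Gt \<and>
    (\<forall>c\<in>Ess p \<union> Ess q. wev P Q w c \<noteq> None) \<and>
    (Ess p \<union> Ess q \<noteq> {} \<longrightarrow> (\<forall>x\<in>Ess P. the (wev P Q w (Min (Ess p \<union> Ess q))) > x)) \<and>
    (\<exists>f. (\<forall>c\<in>Ess p \<union> Ess q. f < the (wev P Q w c) \<and> the (wev P Q w c) < b) \<and>
         monotone_tail (snd (hd w)) Q f b)"
    (is "?lib \<longleftrightarrow> ?framed")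
proof
  assume L: ?lib
  then obtain f where "\<forall>c\<in>Ess p \<union> Ess q. f < the (wev P Q w c) \<and> the (wev P Q w c) < Max (dom q)"
    "if snd (hd w) then p_increasing Q f (Max (dom q)) else p_decreasing Q f (Max (dom q))"
    unfolding liberates_p_el_def by blast
  then have f: "monotone_tail (snd (hd w)) Q f b"
    "\<forall>c\<in>Ess p \<union> Ess q. f < the (wev P Q w c) \<and> the (wev P Q w c) < b"
    unfolding monotone_tail_def using b by auto
  have pi: "pisom P" "pisom Q" and inf: "informative P" "informative Q"
    and ext: "Min (dom P) = a" "Min (dom Q) = a" "Max (dom P) = b" "Max (dom Q) = b"
    using L a b unfolding liberates_p_el_def by auto
  have "f \<in> dom Q" "f < b" using monotone_tail_basic[OF f(1)] by auto
  moreover have "finite (dom Q)" using pi(2) unfolding pisom_def by auto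
  ultimately have "a < b" using Min_le[of "dom Q" f] ext(2) by auto
  then have "framed a b P" "framed a b Q" using informative_framed pi inf ext by auto
  then show ?framed using L f unfolding liberates_p_el_def by blast
next
  assume F: ?framed
  then obtain f where f: "monotone_tail (snd (hd w)) Q f b"
    "\<forall>c\<in>Ess p \<union> Ess q. f < the (wev P Q w c) \<and> the (wev P Q w c) < b" by blast
  have okPQ: "framed a b P" "framed a b Q" using F by auto
  have "if snd (hd w) then p_increasing Q f (Max (dom q)) else p_decreasing Q f (Max (dom q))"
    using f(1) b unfolding monotone_tail_def by simp
  moreover have "\<forall>c\<in>Ess p \<union> Ess q. f < the (wev P Q w c) \<and> the (wev P Q w c) < Max (dom q)"
    using f(2) b by simp
  moreover have "pisom P" "pisom Q" "informative P" "informative Q"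
    using okPQ framed_pisom framed_informative by auto
  moreover have "Min (dom P) = Min (dom p)" "Min (dom Q) = Min (dom q)"
    "Max (dom P) = Max (dom p)" "Max (dom Q) = Max (dom q)"
    using okPQ framed_Min framed_Max a b by auto
  ultimately show ?lib using F unfolding liberates_p_el_def by blast
qed

definition images :: "(rat \<rightharpoonup> rat) \<Rightarrow> (rat \<rightharpoonup> rat) \<Rightarrow> word \<Rightarrow> rat set \<Rightarrow> rat set" where
  "images P Q v E = (\<lambda>c. the (wev P Q v c)) ` E"

lemma wev_Cons_images:
  assumes pi: "pisom P" "pisom Q" "pisom P'" "pisom Q'" and le: "P \<subseteq>\<^sub>m P'" "Q \<subseteq>\<^sub>m Q'"
    and def: "\<forall>c\<in>E. wev P Q v c \<noteq> None"
    and act: "\<forall>x\<in>images P Q v E. letter_act P' Q' l x = Some (h x)"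
  shows "\<forall>c\<in>E. wev P' Q' (l # v) c = Some (h (the (wev P Q v c)))"
    "images P' Q' (l # v) E = h ` images P Q v E"
proof -
  show val: "\<forall>c\<in>E. wev P' Q' (l # v) c = Some (h (the (wev P Q v c)))"
  proof
    fix c assume c: "c \<in> E"
    obtain x where x: "wev P Q v c = Some x" using def c by auto
    have "wev P' Q' v c = Some x" using wev_mono[OF pi le x] .
    moreover have "letter_act P' Q' l x = Some (h x)" using act c x unfolding images_def by force
    ultimately show "wev P' Q' (l # v) c = Some (h (the (wev P Q v c)))" using x by simp
  qed
  then show "images P' Q' (l # v) E = h ` images P Q v E"
    unfolding images_def by (auto simp: image_iff)
qed

definition at_frontier :: "rat \<Rightarrow> rat \<Rightarrow> (rat \<rightharpoonup> rat) \<Rightarrow> (rat \<rightharpoonup> rat) \<Rightarrow> rat set \<Rightarrow> word \<Rightarrow> bool" where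
  "at_frontier a b P Q E v \<longleftrightarrow> v \<noteq> [] \<and> (\<forall>c\<in>E. wev P Q v c \<noteq> None) \<and>
     frontier a b P Q (images P Q v E) (fst (hd v)) (snd (hd v))"

lemma at_frontier_Cons:
  assumes okPQ: "framed a b P" "framed a b Q" and le: "P \<subseteq>\<^sub>m P'" "Q \<subseteq>\<^sub>m Q'"
    and def: "\<forall>c\<in>E. wev P Q v c \<noteq> None"
    and F: "frontier a b P' Q' (h ` images P Q v E) g \<sigma>"
    and act: "\<forall>x\<in>images P Q v E. letter_act P' Q' (g, \<sigma>) x = Some (h x)"
  shows "at_frontier a b P' Q' E ((g, \<sigma>) # v)"
proof -
  have "framed a b P'" "framed a b Q'" using F unfolding frontier_def by auto
  then have pi: "pisom P" "pisom Q" "pisom P'" "pisom Q'" using okPQ framed_pisom by auto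
  show ?thesis using wev_Cons_images[OF pi le def act] F unfolding at_frontier_def by auto
qed

lemma frontier_step:
  assumes F: "at_frontier a b P Q E v" and red: "reduced (l # v)"
  shows "\<exists>P' Q'. P \<subseteq>\<^sub>m P' \<and> Q \<subseteq>\<^sub>m Q' \<and> at_frontier a b P' Q' E (l # v)"
proof -
  obtain g \<sigma> where hd: "hd v = (g, \<sigma>)" by (cases "hd v")
  obtain g' \<sigma>' where l: "l = (g', \<sigma>')" by (cases l)
  let ?X = "images P Q v E"
  have F': "v \<noteq> []" "\<forall>c\<in>E. wev P Q v c \<noteq> None" "frontier a b P Q ?X g \<sigma>"
    using F hd unfolding at_frontier_def by auto
  have okPQ: "framed a b P" "framed a b Q" using F'(3) unfolding frontier_def by auto
  have not_inverse: "\<not> (g' = g \<and> \<sigma>' \<noteq> \<sigma>)" using reduced_Cons_hd[OF red F'(1)] hd l by auto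
  show ?thesis
  proof (cases "g' = g")
    case True
    then have l: "l = (g, \<sigma>)" using not_inverse l by auto
    obtain P' Q' h where "P \<subseteq>\<^sub>m P'" "Q \<subseteq>\<^sub>m Q'" "frontier a b P' Q' (h ` ?X) g \<sigma>"
      "\<forall>x\<in>?X. letter_act P' Q' (g, \<sigma>) x = Some (h x)"
      using frontier_same_letter[OF F'(3)] by blast
    then show ?thesis using at_frontier_Cons[OF okPQ _ _ F'(2)] l by blast
  next
    case False
    then have g': "g' = other g" by (cases g; cases g') auto
    have top: "\<forall>y\<in>points (sel g' P Q). a < y \<longrightarrow> y < b \<longrightarrow> (\<forall>x\<in>?X. y < x)"
      using F'(3) points_sel[of P Q g'] g' unfolding frontier_def by auto
    have X: "finite ?X" "?X \<subseteq> {a<..<b}" using F'(3) unfolding frontier_def by auto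
    obtain P' Q' h where "P \<subseteq>\<^sub>m P'" "Q \<subseteq>\<^sub>m Q'" "frontier a b P' Q' (h ` ?X) g' \<sigma>'"
      "\<forall>x\<in>?X. letter_act P' Q' (g', \<sigma>') x = Some (h x)"
      by (rule frontier_new_letter[OF okPQ X top, of \<sigma>'])
    then show ?thesis using at_frontier_Cons[OF okPQ _ _ F'(2)] l by blast
  qed
qed

lemma Ess_subset_points: "p \<subseteq>\<^sub>m P \<Longrightarrow> Ess p \<subseteq> points P"
  using map_le_implies_dom_le map_le_implies_ran_le unfolding Ess_def points_def by blast

lemma monotone_tail_letter:
  assumes ok: "framed a b Q" and tail: "monotone_tail \<sigma> Q f b" and x: "f < x" "x < b"
    and covered: "if \<sigma> then x \<in> dom Q else x \<in> ran Q"
  shows "\<exists>y. letter_act P Q (Gt, \<sigma>) x = Some y \<and> f < y \<and> y < b \<and> x < y"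
proof -
  have pi: "pisom Q" using framed_pisom[OF ok] .
  have bas: "Q f = Some f" "Q b = Some b" using monotone_tail_basic[OF tail] by auto
  show ?thesis
  proof (cases \<sigma>)
    case True
    then obtain y where y: "Q x = Some y" using covered by auto
    have "f < y" "y < b" using pisom_less[OF pi bas(1) y] pisom_less[OF pi y bas(2)] x by auto
    moreover have "x < y" using monotone_tail_sign[OF tail _ x] y True by auto
    ultimately show ?thesis using True y by (auto simp: letter_act_sel)
  next
    case False
    then obtain y where y: "Q y = Some x" using covered by (auto simp: ran_def)
    have "f < y" "y < b" using pisom_less_iff[OF pi bas(1) y] pisom_less_iff[OF pi y bas(2)] x by auto
    moreover have "x < y" using monotone_tail_sign[OF tail _ \<open>f < y\<close> \<open>y < b\<close>] y False by auto
    ultimately show ?thesis using False y pinv_Some[OF pi] by (auto simp: letter_act_sel)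
  qed
qed

context
  fixes p q :: "rat \<rightharpoonup> rat" and a b :: rat
  assumes ends: "Min (dom p) = a" "Min (dom q) = a" "Max (dom p) = b" "Max (dom q) = b"
begin

text \<open>Repeating the first letter \<open>t\<^sup>\<plusminus>\<^sup>1\<close> of a liberating word: only \<open>q\<close> needs to be
  extended, inside its monotone tail.\<close>

lemma liberates_repeat_letter:
  assumes lib: "liberates_p_el p q P Q v" and hd: "hd v = (Gt, \<sigma>)" and red: "reduced ((Gt, \<sigma>) # v)"
  shows "\<exists>Q'. Q \<subseteq>\<^sub>m Q' \<and> liberates_p_el p q P Q' ((Gt, \<sigma>) # v)"
proof -
  let ?E = "Ess p \<union> Ess q" and ?X = "images P Q v (Ess p \<union> Ess q)"
  note L = lib[unfolded liberates_p_el_framed[OF ends]]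
  have okPQ: "framed a b P" "framed a b Q" using L by auto
  have pi: "pisom P" "pisom Q" using okPQ framed_pisom by auto
  obtain f where f: "\<forall>c\<in>?E. f < the (wev P Q v c) \<and> the (wev P Q v c) < b" "monotone_tail \<sigma> Q f b"
    using L hd by auto
  have finE: "finite ?E" using L Ess_subset_points framed_finite by (meson finite_Un finite_subset)
  have "finite ?X" "?X \<subseteq> {f<..<b}" using finE f(1) unfolding images_def by auto
  then obtain Q' where Q': "framed a b Q'" "monotone_tail \<sigma> Q' f b" "Q \<subseteq>\<^sub>m Q'"
    "\<forall>x\<in>?X. if \<sigma> then x \<in> dom Q' else x \<in> ran Q'"
    using cover_points[OF okPQ(2) f(2)] by blast
  have new: "\<exists>y. wev P Q' ((Gt, \<sigma>) # v) c = Some y \<and> f < y \<and> y < b \<and> the (wev P Q v c) < y"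
    if c: "c \<in> ?E" for c
  proof -
    have "wev P Q v c \<noteq> None" using L c by blast
    then obtain x where x: "wev P Q v c = Some x" by auto
    have "wev P Q' v c = Some x" using wev_mono[OF pi pi(1) framed_pisom[OF Q'(1)] map_le_refl Q'(3) x] .
    moreover have "f < x" "x < b" using f(1)[rule_format, OF c] x by auto
    moreover have "if \<sigma> then x \<in> dom Q' else x \<in> ran Q'"
      using Q'(4) c x unfolding images_def by (metis image_eqI option.sel)
    ultimately obtain y where "wev P Q' v c = Some x" "letter_act P Q' (Gt, \<sigma>) x = Some y"
      "f < y" "y < b" "x < y"
      using monotone_tail_letter[OF Q'(1,2)] by blast
    then show ?thesis using x by auto
  qed
  have above: "\<forall>x\<in>Ess P. the (wev P Q' ((Gt, \<sigma>) # v) (Min ?E)) > x" if ne: "?E \<noteq> {}"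
  proof
    fix z assume "z \<in> Ess P"
    then have "z < the (wev P Q v (Min ?E))" using L ne by auto
    then show "the (wev P Q' ((Gt, \<sigma>) # v) (Min ?E)) > z" using new[OF Min_in[OF finE ne]] by auto
  qed
  have "liberates_p_el p q P Q' ((Gt, \<sigma>) # v)"
    unfolding liberates_p_el_framed[OF ends]
  proof (intro conjI)
    show "framed a b P" "framed a b Q'" "p \<subseteq>\<^sub>m P" using okPQ Q'(1) L by auto
    show "q \<subseteq>\<^sub>m Q'" using L Q'(3) map_le_trans by blast
    show "reduced ((Gt, \<sigma>) # v)" "(Gt, \<sigma>) # v \<noteq> []" "fst (hd ((Gt, \<sigma>) # v)) = Gt" using red by auto
    show "\<forall>c\<in>?E. wev P Q' ((Gt, \<sigma>) # v) c \<noteq> None" using new by blast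
    show "?E \<noteq> {} \<longrightarrow> (\<forall>x\<in>Ess P. the (wev P Q' ((Gt, \<sigma>) # v) (Min ?E)) > x)" using above by blast
    show "\<exists>f. (\<forall>c\<in>?E. f < the (wev P Q' ((Gt, \<sigma>) # v) c) \<and> the (wev P Q' ((Gt, \<sigma>) # v) c) < b) \<and>
        monotone_tail (snd (hd ((Gt, \<sigma>) # v))) Q' f b"
      using new Q'(2) by (intro exI[of _ f]) force
  qed
  then show ?thesis using Q'(3) by blast
qed

text \<open>Switching to a letter \<open>s\<^sup>\<plusminus>\<^sup>1\<close> after a liberating word: the images of \<open>E\<close> lie above
  all essential points of \<open>P\<close>, so they can be sent to a frontier.\<close>

lemma liberates_switch_letter:
  assumes lib: "liberates_p_el p q P Q v"
  shows "\<exists>P' Q'. P \<subseteq>\<^sub>m P' \<and> Q \<subseteq>\<^sub>m Q' \<and> at_frontier a b P' Q' (Ess p \<union> Ess q) ((Gs, \<sigma>) # v)"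
proof -
  let ?E = "Ess p \<union> Ess q" and ?X = "images P Q v (Ess p \<union> Ess q)"
  note L = lib[unfolded liberates_p_el_framed[OF ends]]
  have okPQ: "framed a b P" "framed a b Q" using L by auto
  obtain f where f: "\<forall>c\<in>?E. f < the (wev P Q v c) \<and> the (wev P Q v c) < b"
    "monotone_tail (snd (hd v)) Q f b" using L by auto
  have finE: "finite ?E" using L Ess_subset_points framed_finite by (meson finite_Un finite_subset)
  have fa: "a \<le> f" using monotone_tail_ge[OF f(2) okPQ(2)] .
  have X: "finite ?X" "?X \<subseteq> {a<..<b}" using finE f(1) fa unfolding images_def by force+
  have top: "\<forall>y\<in>points (sel Gs P Q). a < y \<longrightarrow> y < b \<longrightarrow> (\<forall>x\<in>?X. y < x)"
  proof (intro ballI impI)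
    fix y x assume y: "y \<in> points (sel Gs P Q)" "a < y" "y < b" and x: "x \<in> ?X"
    obtain c where c: "c \<in> ?E" "x = the (wev P Q v c)" using x unfolding images_def by auto
    have ne: "?E \<noteq> {}" using c by auto
    have m: "Min ?E \<in> ?E" "Min ?E \<le> c" using Min_in[OF finE ne] Min_le[OF finE c(1)] by auto
    have "y \<in> Ess P" using framed_Ess[OF okPQ(1)] y by auto
    then have "y < the (wev P Q v (Min ?E))" using L ne by auto
    also have "\<dots> \<le> x"
      using L m c wev_le[OF framed_pisom[OF okPQ(1)] framed_pisom[OF okPQ(2)], of v "Min ?E" _ c]
      by force
    finally show "y < x" .
  qed
  obtain P' Q' h where "P \<subseteq>\<^sub>m P'" "Q \<subseteq>\<^sub>m Q'" "frontier a b P' Q' (h ` ?X) Gs \<sigma>"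
    "\<forall>x\<in>?X. letter_act P' Q' (Gs, \<sigma>) x = Some (h x)"
    by (rule frontier_new_letter[OF okPQ X top, of \<sigma>])
  then show ?thesis using at_frontier_Cons[OF okPQ _ _] L by blast
qed

text \<open>A frontier reached by a word starting with \<open>t\<^sup>\<plusminus>\<^sup>1\<close> is liberating: its points lie above
  all other interior points and in a monotone tail of \<open>Q\<close>.\<close>

lemma frontier_liberates:
  assumes F: "at_frontier a b P Q (Ess p \<union> Ess q) v" and hd: "fst (hd v) = Gt"
    and le: "p \<subseteq>\<^sub>m P" "q \<subseteq>\<^sub>m Q" and red: "reduced v"
  shows "liberates_p_el p q P Q v"
proof -
  let ?E = "Ess p \<union> Ess q" and ?X = "images P Q v (Ess p \<union> Ess q)"
  have F': "v \<noteq> []" "\<forall>c\<in>?E. wev P Q v c \<noteq> None" "frontier a b P Q ?X Gt (snd (hd v))"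
    using F hd unfolding at_frontier_def by auto
  have okP: "framed a b P" and Xab: "?X \<subseteq> {a<..<b}" and XP: "?X \<inter> points P = {}"
    and top: "\<forall>y\<in>points P \<union> points Q. a < y \<longrightarrow> y < b \<longrightarrow> y \<notin> ?X \<longrightarrow> (\<forall>x\<in>?X. y < x)"
    using F'(3) unfolding frontier_def by auto
  obtain f where f: "monotone_tail (snd (hd v)) Q f b" "\<forall>x\<in>?X. f < x"
    using F'(3) unfolding frontier_def by auto
  have finE: "finite ?E" using okP le(1) Ess_subset_points framed_finite F'(3) le(2)
    unfolding frontier_def by (meson finite_Un finite_subset)
  have "\<forall>x\<in>Ess P. the (wev P Q v (Min ?E)) > x" if ne: "?E \<noteq> {}"
  proof
    fix z assume z: "z \<in> Ess P"
    have "the (wev P Q v (Min ?E)) \<in> ?X" using Min_in[OF finE ne] unfolding images_def by blast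
    moreover have "z \<in> points P" "a < z" "z < b" using z framed_Ess[OF okP] by auto
    ultimately show "the (wev P Q v (Min ?E)) > z" using top XP by blast
  qed
  moreover have "\<forall>c\<in>?E. f < the (wev P Q v c) \<and> the (wev P Q v c) < b"
    using f(2) Xab unfolding images_def by fastforce
  ultimately show ?thesis unfolding liberates_p_el_framed[OF ends]
    using F'(1,2) F'(3) f(1) le red hd unfolding frontier_def by blast
qed

end

text \<open>Prepending the letters of a word \<open>v\<close> one at a time: as long as they repeat the
  first letter \<open>(Gt, \<sigma>)\<close> of \<open>w\<close>, the word stays liberating; the first other letter creates
  a frontier, which then persists.\<close>

lemma elementary_prefix:
  assumes ends: "Min (dom p) = a" "Min (dom q) = a" "Max (dom p) = b" "Max (dom q) = b"
    and lib: "liberates_p_el p q p' q' w" and w: "hd w = (Gt, \<sigma>)" and red: "reduced (v @ w)"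
  shows "\<exists>P Q. p' \<subseteq>\<^sub>m P \<and> q' \<subseteq>\<^sub>m Q \<and>
      ((set v \<subseteq> {(Gt, \<sigma>)} \<and> liberates_p_el p q P Q (v @ w)) \<or> at_frontier a b P Q (Ess p \<union> Ess q) (v @ w))"
  using red
proof (induction v)
  case Nil
  show ?case using lib map_le_refl by fastforce
next
  case (Cons l v)
  let ?E = "Ess p \<union> Ess q"
  have r: "reduced (l # v @ w)" using Cons.prems by simp
  then obtain P Q where PQ: "p' \<subseteq>\<^sub>m P" "q' \<subseteq>\<^sub>m Q"
    "(set v \<subseteq> {(Gt, \<sigma>)} \<and> liberates_p_el p q P Q (v @ w)) \<or> at_frontier a b P Q ?E (v @ w)"
    using Cons.IH reduced_Cons by blast
  from PQ(3) show ?case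
  proof (elim disjE conjE)
    assume sv: "set v \<subseteq> {(Gt, \<sigma>)}" and libv: "liberates_p_el p q P Q (v @ w)"
    have "w \<noteq> []" using lib unfolding liberates_p_el_def by auto
    then have hd: "hd (v @ w) = (Gt, \<sigma>)" "v @ w \<noteq> []" using sv w by (cases v; auto)+
    obtain g' \<sigma>' where l: "l = (g', \<sigma>')" by (cases l)
    show ?case
    proof (cases g')
      case Gt
      then have l_rep: "l = (Gt, \<sigma>)" using reduced_Cons_hd[OF r hd(2)] hd(1) l by auto
      then obtain Q' where "Q \<subseteq>\<^sub>m Q'" "liberates_p_el p q P Q' (l # v @ w)"
        using liberates_repeat_letter[OF ends libv hd(1)] r by auto
      then show ?thesis using PQ(1,2) sv l_rep map_le_trans[of q' Q Q'] by auto
    next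
      case Gs
      then obtain P' Q' where "P \<subseteq>\<^sub>m P'" "Q \<subseteq>\<^sub>m Q'" "at_frontier a b P' Q' ?E (l # v @ w)"
        using liberates_switch_letter[OF ends libv] l by blast
      then show ?thesis using PQ(1,2) map_le_trans by (metis append_Cons)
    qed
  next
    assume "at_frontier a b P Q ?E (v @ w)"
    then obtain P' Q' where "P \<subseteq>\<^sub>m P'" "Q \<subseteq>\<^sub>m Q'" "at_frontier a b P' Q' ?E (l # v @ w)"
      using frontier_step r by blast
    then show ?thesis using PQ(1,2) map_le_trans by (metis append_Cons)
  qed
qed

text \<open>Lemma 3.10 for an elementary pair on \<open>[a, b]\<close>: since \<open>u\<close> is empty or starts with
  \<open>t\<^sup>\<plusminus>\<^sup>1\<close>, both outcomes of the prefix construction are liberating.\<close>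

lemma elementary_extension:
  assumes ends: "Min (dom p) = a" "Min (dom q) = a" "Max (dom p) = b" "Max (dom q) = b"
    and lib: "liberates_p_el p q p' q' w" and red: "reduced (u @ w)" and hu: "u = [] \<or> fst (hd u) = Gt"
  shows "\<exists>p'' q''. p' \<subseteq>\<^sub>m p'' \<and> q' \<subseteq>\<^sub>m q'' \<and> liberates_p_el p q p'' q'' (u @ w)"
proof -
  note L = lib[unfolded liberates_p_el_framed[OF ends]]
  obtain \<sigma> where w: "w \<noteq> []" "hd w = (Gt, \<sigma>)" using L by (cases "hd w") auto
  obtain P Q where PQ: "p' \<subseteq>\<^sub>m P" "q' \<subseteq>\<^sub>m Q"
    "liberates_p_el p q P Q (u @ w) \<or> at_frontier a b P Q (Ess p \<union> Ess q) (u @ w)"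
    using elementary_prefix[OF ends lib w(2) red] by blast
  moreover have "fst (hd (u @ w)) = Gt" using hu w by (cases u) auto
  moreover have "p \<subseteq>\<^sub>m P" "q \<subseteq>\<^sub>m Q" using L PQ(1,2) map_le_trans by blast+
  ultimately show ?thesis using frontier_liberates[OF ends _ _ _ _ red] by blast
qed

section \<open>Gluing the elementary pieces\<close>

definition consecutive :: "rat set \<Rightarrow> rat \<Rightarrow> rat \<Rightarrow> bool" where
  "consecutive F a b \<longleftrightarrow> a \<in> F \<and> b \<in> F \<and> a < b \<and> (\<forall>c\<in>F. \<not> (a < c \<and> c < b))"

lemma consecutive_overlap:
  assumes "consecutive F a b" "consecutive F c d" "(a, b) \<noteq> (c, d)" "x \<in> {a..b}" "x \<in> {c..d}"
  shows "x = a \<or> x = b"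
proof -
  have A: "a \<in> F" "b \<in> F" "a < b" "\<forall>e\<in>F. \<not> (a < e \<and> e < b)"
    and C: "c \<in> F" "d \<in> F" "c < d" "\<forall>e\<in>F. \<not> (c < e \<and> e < d)"
    using assms(1,2) unfolding consecutive_def by auto
  consider "a < c" | "c < a" | "a = c" by fastforce
  then show ?thesis
  proof cases
    case 1
    then have "b \<le> c" using A(4) C(1) by fastforce
    then show ?thesis using assms(4,5) by auto
  next
    case 2
    then have "d \<le> a" using C(4) A(1) by fastforce
    then show ?thesis using assms(4,5) by auto
  next
    case 3
    then have "b = d" using A C by (meson linorder_neqE)
    then show ?thesis using 3 assms(3) by auto
  qed
qed

lemma restrict_Min_Max:
  assumes "finite (dom p)" "a \<in> dom p" "b \<in> dom p" "a \<le> b"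
  shows "Min (dom (p |` {a..b})) = a" "Max (dom (p |` {a..b})) = b"
  using assms by (auto intro!: Min_eqI Max_eqI)

definition patch :: "rat \<Rightarrow> rat \<Rightarrow> (rat \<rightharpoonup> rat) \<Rightarrow> (rat \<rightharpoonup> rat) \<Rightarrow> (rat \<rightharpoonup> rat)" where
  "patch a b M P = (\<lambda>x. if x \<in> {a..b} then M x else P x)"

lemma patch_interval:
  assumes pP: "pisom P" and okM: "framed a b M" and Pab: "P a = Some a" "P b = Some b"
    and le: "P |` {a..b} \<subseteq>\<^sub>m M"
  shows "pisom (patch a b M P)" "P \<subseteq>\<^sub>m patch a b M P" "patch a b M P |` {a..b} = M"
    "dom (patch a b M P) \<subseteq> dom M \<union> dom P"
    "\<And>c d. \<forall>x\<in>{a..b} \<inter> {c..d}. x = a \<or> x = b \<Longrightarrow> patch a b M P |` {c..d} = P |` {c..d}"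
proof -
  have pM: "pisom M" and dM: "dom M \<subseteq> {a..b}" and Mab: "M a = Some a" "M b = Some b"
    using okM unfolding framed_def by auto
  show "dom (patch a b M P) \<subseteq> dom M \<union> dom P" unfolding patch_def by (auto split: if_splits)
  then show "pisom (patch a b M P)"
    unfolding pisom_def
  proof (intro conjI ballI impI)
    show "finite (dom (patch a b M P))"
      using \<open>dom (patch a b M P) \<subseteq> dom M \<union> dom P\<close> pM pP unfolding pisom_def
      by (meson finite_Un finite_subset)
  next
    fix x y assume x: "x \<in> dom (patch a b M P)" and y: "y \<in> dom (patch a b M P)" and xy: "x < y"
    text \<open>Points of \<open>[a, b]\<close> have images in \<open>[a, b]\<close>, other points images outside.\<close>
    have inside: "a \<le> v \<and> v \<le> b" if "M z = Some v" for z v using framed_ran[OF okM that] by auto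
    have below: "v < a" if "P z = Some v" "z < a" for z v using pisom_less[OF pP that(1) Pab(1) that(2)] .
    have above: "b < v" if "P z = Some v" "b < z" for z v using pisom_less[OF pP Pab(2) that(1) that(2)] .
    obtain u v where u: "patch a b M P x = Some u" and v: "patch a b M P y = Some v" using x y by auto
    show "the (patch a b M P x) < the (patch a b M P y)"
      using u v xy inside below above pisom_less[OF pM] pisom_less[OF pP]
      unfolding patch_def by (auto split: if_splits) (meson atLeastAtMost_iff le_less_trans less_le_trans not_le)+
  qed
  show "P \<subseteq>\<^sub>m patch a b M P"
    unfolding map_le_def patch_def using map_le_Some[OF le] by (auto simp: domIff)
  show "patch a b M P |` {a..b} = M"
  proof
    fix x
    have "x \<notin> {a..b} \<Longrightarrow> M x = None" using dM by blast
    then show "(patch a b M P |` {a..b}) x = M x" unfolding patch_def restrict_map_def by auto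
  qed
  show "patch a b M P |` {c..d} = P |` {c..d}" if "\<forall>x\<in>{a..b} \<inter> {c..d}. x = a \<or> x = b" for c d
  proof
    fix x
    have "x \<in> {a..b} \<Longrightarrow> x \<in> {c..d} \<Longrightarrow> M x = P x" using that Mab Pab by (metis IntI)
    then show "(patch a b M P |` {c..d}) x = (P |` {c..d}) x" unfolding patch_def restrict_map_def by auto
  qed
qed

lemma elementary_piece:
  assumes fin: "finite (dom p)" "finite (dom q)" and c: "consecutive (Fixp p \<inter> Fixp q) a b"
    and lib: "liberates_p_el (p |` {a..b}) (q |` {a..b}) P Q w"
    and red: "reduced (u @ w)" and hu: "u = [] \<or> fst (hd u) = Gt"
  obtains P' Q' where "P \<subseteq>\<^sub>m P'" "Q \<subseteq>\<^sub>m Q'" "framed a b P'" "framed a b Q'"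
    "liberates_p_el (p |` {a..b}) (q |` {a..b}) P' Q' (u @ w)"
proof -
  have "a \<in> dom p" "b \<in> dom p" "a \<in> dom q" "b \<in> dom q" "a \<le> b"
    using c unfolding consecutive_def Fixp_def by auto
  then have ends: "Min (dom (p |` {a..b})) = a" "Min (dom (q |` {a..b})) = a"
    "Max (dom (p |` {a..b})) = b" "Max (dom (q |` {a..b})) = b"
    using restrict_Min_Max[OF fin(1)] restrict_Min_Max[OF fin(2)] by auto
  obtain P' Q' where "P \<subseteq>\<^sub>m P'" "Q \<subseteq>\<^sub>m Q'" "liberates_p_el (p |` {a..b}) (q |` {a..b}) P' Q' (u @ w)"
    using elementary_extension[OF ends lib red hu] by blast
  then show ?thesis using that liberates_p_el_framed[OF ends] by blast
qed

context
  fixes p q p' q' :: "rat \<rightharpoonup> rat" and u w :: word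
  assumes pe: "piecewise_elementary p q" and lib: "liberates_p p q p' q' w"
    and red: "reduced (u @ w)" and hu: "u = [] \<or> fst (hd u) = Gt"
begin

definition pieces :: "(rat \<times> rat) set" where
  "pieces = {(a, b). consecutive (Fixp p \<inter> Fixp q) a b}"

definition span :: "rat set" where
  "span = {Min (dom p)..Max (dom p)}"

definition glued :: "(rat \<times> rat) set \<Rightarrow> (rat \<rightharpoonup> rat) \<Rightarrow> (rat \<rightharpoonup> rat) \<Rightarrow> bool" where
  "glued S P Q \<longleftrightarrow> p' \<subseteq>\<^sub>m P \<and> q' \<subseteq>\<^sub>m Q \<and> pisom P \<and> pisom Q \<and> dom P \<subseteq> span \<and> dom Q \<subseteq> span \<and>
     (\<forall>(c, d)\<in>S. liberates_p_el (p |` {c..d}) (q |` {c..d}) (P |` {c..d}) (Q |` {c..d}) (u @ w)) \<and>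
     (\<forall>(c, d)\<in>pieces - S. P |` {c..d} = p' |` {c..d} \<and> Q |` {c..d} = q' |` {c..d})"

lemma liberated_pair_facts:
  shows "pisom p'" "pisom q'" "p \<subseteq>\<^sub>m p'" "q \<subseteq>\<^sub>m q'"
    "Min (dom p') = Min (dom p)" "Min (dom q') = Min (dom p)"
    "Max (dom p') = Max (dom p)" "Max (dom q') = Max (dom p)"
    "finite (dom p)" "finite (dom q)" "dom p \<noteq> {}" "dom q \<noteq> {}"
proof -
  show L: "pisom p'" "pisom q'" "p \<subseteq>\<^sub>m p'" "q \<subseteq>\<^sub>m q'" "Min (dom p') = Min (dom p)"
    "Max (dom p') = Max (dom p)"
    using lib unfolding liberates_p_def by auto
  show "Min (dom q') = Min (dom p)" "Max (dom q') = Max (dom p)"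
    using lib pe unfolding liberates_p_def piecewise_elementary_def by auto
  show "finite (dom p)" "finite (dom q)"
    using L map_le_implies_dom_le finite_subset unfolding pisom_def by metis+
  show "dom p \<noteq> {}" "dom q \<noteq> {}" using pe unfolding piecewise_elementary_def informative_def by auto
qed

lemma dom_in_span: "pisom P \<Longrightarrow> Min (dom P) = Min (dom p) \<Longrightarrow> Max (dom P) = Max (dom p) \<Longrightarrow> dom P \<subseteq> span"
  unfolding span_def pisom_def by (metis Max_ge Min_le atLeastAtMost_iff subsetI)

lemma glued_empty: "glued {} p' q'"
  using liberated_pair_facts dom_in_span unfolding glued_def by auto

text \<open>Adding one more piece: patch the elementary solution on \<open>[a, b]\<close> into both maps.\<close>

lemma glued_insert:
  assumes S: "S \<subseteq> pieces" and ab: "(a, b) \<in> pieces - S" and G: "glued S P Q"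
  shows "\<exists>P' Q'. glued (insert (a, b) S) P' Q'"
proof -
  have G': "p' \<subseteq>\<^sub>m P" "q' \<subseteq>\<^sub>m Q" "pisom P" "pisom Q" "dom P \<subseteq> span" "dom Q \<subseteq> span"
    "\<forall>(c, d)\<in>S. liberates_p_el (p |` {c..d}) (q |` {c..d}) (P |` {c..d}) (Q |` {c..d}) (u @ w)"
    "\<forall>(c, d)\<in>pieces - S. P |` {c..d} = p' |` {c..d} \<and> Q |` {c..d} = q' |` {c..d}"
    using G unfolding glued_def by auto
  have cab: "consecutive (Fixp p \<inter> Fixp q) a b" using ab unfolding pieces_def by auto
  have "liberates_p_el (p |` {a..b}) (q |` {a..b}) (p' |` {a..b}) (q' |` {a..b}) w"
    using lib cab unfolding liberates_p_def consecutive_def by blast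
  moreover have "P |` {a..b} = p' |` {a..b}" "Q |` {a..b} = q' |` {a..b}" using G'(8) ab by auto
  ultimately have "liberates_p_el (p |` {a..b}) (q |` {a..b}) (P |` {a..b}) (Q |` {a..b}) w" by simp
  then obtain PI QI where I: "P |` {a..b} \<subseteq>\<^sub>m PI" "Q |` {a..b} \<subseteq>\<^sub>m QI" "framed a b PI" "framed a b QI"
    "liberates_p_el (p |` {a..b}) (q |` {a..b}) PI QI (u @ w)"
    using elementary_piece[OF liberated_pair_facts(9,10) cab _ red hu] by blast
  have "p a = Some a" "p b = Some b" "q a = Some a" "q b = Some b"
    using cab unfolding consecutive_def Fixp_def by auto
  then have fix_ab: "P a = Some a" "P b = Some b" "Q a = Some a" "Q b = Some b"
    using map_le_Some map_le_trans[OF liberated_pair_facts(3) G'(1)] map_le_trans[OF liberated_pair_facts(4) G'(2)] by metis+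
  note PP = patch_interval[OF G'(3) I(3) fix_ab(1,2) I(1)]
  note QQ = patch_interval[OF G'(4) I(4) fix_ab(3,4) I(2)]
  let ?P = "patch a b PI P" and ?Q = "patch a b QI Q"
  text \<open>Other pieces meet \<open>[a, b]\<close> at most in its endpoints, so they are unchanged.\<close>
  have other: "?P |` {c..d} = P |` {c..d} \<and> ?Q |` {c..d} = Q |` {c..d}"
    if "(c, d) \<in> pieces" "(c, d) \<noteq> (a, b)" for c d
    using PP(5) QQ(5) consecutive_overlap[OF cab, of c d] that unfolding pieces_def by auto
  have "{a..b} \<subseteq> span"
    using cab liberated_pair_facts(9) unfolding consecutive_def Fixp_def span_def by auto
  then have "dom ?P \<subseteq> span" "dom ?Q \<subseteq> span"
    using PP(4) QQ(4) I(3,4) G'(5,6) unfolding framed_def by blast+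
  moreover have "liberates_p_el (p |` {c..d}) (q |` {c..d}) (?P |` {c..d}) (?Q |` {c..d}) (u @ w)"
    if cd: "(c, d) \<in> insert (a, b) S" for c d
  proof (cases "(c, d) = (a, b)")
    case True then show ?thesis using I(5) PP(3) QQ(3) by auto
  next
    case False
    then have "(c, d) \<in> S" using cd by auto
    then have "liberates_p_el (p |` {c..d}) (q |` {c..d}) (P |` {c..d}) (Q |` {c..d}) (u @ w)"
      "(c, d) \<in> pieces" using G'(7) S by auto
    then show ?thesis using other[of c d] False by simp
  qed
  then have "\<forall>(c, d)\<in>insert (a, b) S.
      liberates_p_el (p |` {c..d}) (q |` {c..d}) (?P |` {c..d}) (?Q |` {c..d}) (u @ w)" by blast
  moreover have "?P |` {c..d} = p' |` {c..d} \<and> ?Q |` {c..d} = q' |` {c..d}"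
    if "(c, d) \<in> pieces - insert (a, b) S" for c d
  proof -
    have cd: "(c, d) \<in> pieces" "(c, d) \<noteq> (a, b)" "(c, d) \<in> pieces - S" using that by auto
    show ?thesis using bspec[OF G'(8) cd(3)] other[OF cd(1,2)] by simp
  qed
  then have "\<forall>(c, d)\<in>pieces - insert (a, b) S. ?P |` {c..d} = p' |` {c..d} \<and> ?Q |` {c..d} = q' |` {c..d}"
    by blast
  ultimately have "glued (insert (a, b) S) ?P ?Q"
    unfolding glued_def using G'(1,2) PP(1,2) QQ(1,2) map_le_trans by blast
  then show ?thesis by blast
qed

lemma finite_pieces: "finite pieces"
proof -
  have "Fixp p \<inter> Fixp q \<subseteq> dom p" unfolding Fixp_def by auto
  then have "finite (Fixp p \<inter> Fixp q)" using liberated_pair_facts(9) finite_subset by blast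
  moreover have "pieces \<subseteq> (Fixp p \<inter> Fixp q) \<times> (Fixp p \<inter> Fixp q)"
    unfolding pieces_def consecutive_def by auto
  ultimately show ?thesis by (meson finite_SigmaI finite_subset)
qed

text \<open>Lemma 3.10 for liberation of \<open>p\<close>: treat all pieces one after the other.\<close>

lemma piecewise_extension:
  "\<exists>p'' q''. p' \<subseteq>\<^sub>m p'' \<and> q' \<subseteq>\<^sub>m q'' \<and> pisom p'' \<and> pisom q'' \<and> liberates_p p q p'' q'' (u @ w)"
proof -
  have "S \<subseteq> pieces \<Longrightarrow> \<exists>P Q. glued S P Q" if "finite S" for S
    using that
  proof (induction S rule: finite_induct)
    case empty then show ?case using glued_empty by blast
  next
    case (insert ab S)
    then show ?case using glued_insert[of S "fst ab" "snd ab"] by auto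
  qed
  then obtain P Q where G: "glued pieces P Q" using finite_pieces by blast
  then have G': "p' \<subseteq>\<^sub>m P" "q' \<subseteq>\<^sub>m Q" "pisom P" "pisom Q" "dom P \<subseteq> span" "dom Q \<subseteq> span"
    unfolding glued_def by auto
  have le: "p \<subseteq>\<^sub>m P" "q \<subseteq>\<^sub>m Q"
    using map_le_trans[OF liberated_pair_facts(3) G'(1)] map_le_trans[OF liberated_pair_facts(4) G'(2)] .
  have same_ends: "Min (dom q) = Min (dom p)" "Max (dom q) = Max (dom p)"
    using pe unfolding piecewise_elementary_def by auto
  have "Min (dom p) \<in> dom P" "Max (dom p) \<in> dom P" "Min (dom p) \<in> dom Q" "Max (dom p) \<in> dom Q"
    using Min_in[OF liberated_pair_facts(9,11)] Max_in[OF liberated_pair_facts(9,11)]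
      Min_in[OF liberated_pair_facts(10,12)] Max_in[OF liberated_pair_facts(10,12)]
      map_le_implies_dom_le[OF le(1)] map_le_implies_dom_le[OF le(2)] same_ends by auto
  moreover have "finite (dom P)" "finite (dom Q)" using G'(3,4) unfolding pisom_def by auto
  ultimately have "Min (dom P) = Min (dom p)" "Max (dom P) = Max (dom p)"
    "Min (dom Q) = Min (dom q)" "Max (dom Q) = Max (dom q)"
    using G'(5,6) same_ends unfolding span_def
    by (metis Min_eqI Max_eqI atLeastAtMost_iff subsetD)+
  moreover have "\<forall>a b. a \<in> Fixp p \<inter> Fixp q \<and> b \<in> Fixp p \<inter> Fixp q \<and> a < b \<and>
      (\<forall>c\<in>Fixp p \<inter> Fixp q. \<not> (a < c \<and> c < b)) \<longrightarrow>
      liberates_p_el (p |` {a..b}) (q |` {a..b}) (P |` {a..b}) (Q |` {a..b}) (u @ w)"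
    using G unfolding glued_def pieces_def consecutive_def by auto
  ultimately have "liberates_p p q P Q (u @ w)"
    unfolding liberates_p_def using G'(3,4) le red by blast
  then show ?thesis using G' by blast
qed
end

section \<open>Exchanging the roles of \<open>p\<close> and \<open>q\<close>\<close>

text \<open>Interchanging the generators \<open>s\<close> and \<open>t\<close> turns liberation of \<open>q\<close> into liberation of
  \<open>p\<close> for the swapped pair.\<close>

definition swap_letter :: "gen \<times> bool \<Rightarrow> gen \<times> bool" where
  "swap_letter l = (other (fst l), snd l)"

lemma other_eq_iff: "other x = other y \<longleftrightarrow> x = y"
  by (cases x; cases y) auto

lemma other_eq_Gt: "other g = Gt \<longleftrightarrow> g = Gs"
  by (cases g) auto

lemma wev_swap: "wev q p (map swap_letter v) c = wev p q v c"
proof -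
  have "letter_act q p (swap_letter l) = letter_act p q l" for l
    by (cases l; cases "fst l"; cases "snd l") (auto simp: swap_letter_def)
  then show ?thesis by (induction v) auto
qed

lemma reduced_swap: "reduced (map swap_letter v) \<longleftrightarrow> reduced v"
  unfolding reduced_def by (simp add: swap_letter_def other_eq_iff)

lemma liberates_q_el_swap: "liberates_q_el p q P Q w \<longleftrightarrow> liberates_p_el q p Q P (map swap_letter w)"
proof (cases w)
  case Nil then show ?thesis unfolding liberates_q_el_def liberates_p_el_def by simp
next
  case (Cons l w')
  have h: "hd (map swap_letter w) = swap_letter l" "hd w = l" using Cons by auto
  show ?thesis unfolding liberates_q_el_def liberates_p_el_def
    by (simp only: h wev_swap reduced_swap Un_commute[of "Ess q" "Ess p"])
       (auto simp: swap_letter_def other_eq_Gt map_le_def)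
qed

lemma liberates_q_swap: "liberates_q p q P Q w \<longleftrightarrow> liberates_p q p Q P (map swap_letter w)"
  unfolding liberates_q_def liberates_p_def liberates_q_el_swap reduced_swap
  by (simp only: Int_commute[of "Fixp q" "Fixp p"]) blast

theorem lemma3p10:
  fixes p q p' q' :: "rat \<rightharpoonup> rat" and u w :: word
  assumes "pisom p" and "pisom q" and "piecewise_elementary p q"
    and "reduced u" and "reduced (u @ w)"
  shows "(liberates_p p q p' q' w \<and> (u = [] \<or> fst (hd u) = Gt) \<longrightarrow>
           (\<exists>p'' q''. p' \<subseteq>\<^sub>m p'' \<and> q' \<subseteq>\<^sub>m q'' \<and> pisom p'' \<and> pisom q'' \<and>
                      liberates_p p q p'' q'' (u @ w)))
       \<and> (liberates_q p q p' q' w \<and> (u = [] \<or> fst (hd u) = Gs) \<longrightarrow>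
           (\<exists>p'' q''. p' \<subseteq>\<^sub>m p'' \<and> q' \<subseteq>\<^sub>m q'' \<and> pisom p'' \<and> pisom q'' \<and>
                      liberates_q p q p'' q'' (u @ w)))"
proof (intro conjI impI)
  assume "liberates_p p q p' q' w \<and> (u = [] \<or> fst (hd u) = Gt)"
  then show "\<exists>p'' q''. p' \<subseteq>\<^sub>m p'' \<and> q' \<subseteq>\<^sub>m q'' \<and> pisom p'' \<and> pisom q'' \<and> liberates_p p q p'' q'' (u @ w)"
    using piecewise_extension[OF assms(3) _ assms(5)] by blast
next
  assume h: "liberates_q p q p' q' w \<and> (u = [] \<or> fst (hd u) = Gs)"
  text \<open>Swap the generators and apply the first part to the pair \<open>(q, p)\<close>.\<close>
  have pe: "piecewise_elementary q p" using assms(3) unfolding piecewise_elementary_def by auto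
  have lib: "liberates_p q p q' p' (map swap_letter w)" using h liberates_q_swap by auto
  have red: "reduced (map swap_letter u @ map swap_letter w)" using assms(5) reduced_swap[of "u @ w"] by simp
  have hu: "map swap_letter u = [] \<or> fst (hd (map swap_letter u)) = Gt"
    using h by (cases u) (auto simp: swap_letter_def other_eq_Gt)
  obtain q'' p'' where "q' \<subseteq>\<^sub>m q''" "p' \<subseteq>\<^sub>m p''" "pisom q''" "pisom p''"
    "liberates_p q p q'' p'' (map swap_letter u @ map swap_letter w)"
    using piecewise_extension[OF pe lib red hu] by blast
  then show "\<exists>p'' q''. p' \<subseteq>\<^sub>m p'' \<and> q' \<subseteq>\<^sub>m q'' \<and> pisom p'' \<and> pisom q'' \<and> liberates_q p q p'' q'' (u @ w)"
    using liberates_q_swap by auto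
qed

end
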